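(* In the setting of the context, fix $\alpha>0$ and suppose the spectral radius of $\mathcal{H}_{22}$ satisfies $\sigma(\mathcal{H}_{22})<1$. Then $I-\mathcal{H}_{11}$ and $I-\mathcal{H}_{22}$ are invertible and, as $k\to\infty$, $$q^k\to q^\infty:=(I-\mathcal{H}_{11})^{-1}u_q^\infty,\qquad \hat{\mathbf Q}^k\to\hat{\mathbf Q}^\infty:=(I_{nn_\xi^2}-\mathcal{H}_{22})^{-1}(\mathcal{H}_{21}q^\infty+u_Q^\infty),$$ $$\delta^k\to\delta^\infty:=C_\delta(I_{nn_\xi^2}-\mathcal{H}_{22})^{-1}(\mathcal{H}_{21}q^\infty+u_Q^\infty),$$ where $u_q^\infty$ and $u_Q^\infty$ are defined as $u_q^k,u_Q^k$ with $p_i^k$ replaced by $p_i^\infty$.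
   Context: Setting. $\mathcal{S}$ is a finite set; $\{s^k\}_{k\ge0}$ is a Markov chain on $\mathcal{S}$ that is irreducible and aperiodic. A feature map $\phi:\mathcal{S}\to\mathbb{R}^p$ is given, with linearly independent feature vectors $\{\phi(s)\}_{s\in\mathcal{S}}$. $\gamma\in(0,1)$. There are $M$ agents with rewards $R_m:\mathcal{S}\times\mathcal{S}\to\mathbb{R}$. $W\in\mathbb{R}^{M\times M}$ is doubly stochastic with entries in $[0,1]$ whose off-diagonal sparsity pattern is that of a connected undirected graph. Decentralized TD(0) with learning rate $\alpha>0$ and deterministic initial weights: $\theta_m^{k+1}=\sum_{m'}W_{mm'}\theta_{m'}^k+\alpha\phi(s^k)[(\gamma\phi(s^{k+1})-\phi(s^k))^\top\theta_m^k+R_m(s^k,s^{k+1})]$. Let $n=|\mathcal{S}|^2$, identify pairs $(s,s')$ with $\mathcal{N}=\{1,\dots,n\}$, and let $z^k$ be the index of $(s^k,s^{k+1})$; $\{z^k\}$ is a Markov chain with $p_{ij}=\mathbb{P}(z^{k+1}=j\mid z^k=i)$, $p_i^k=\mathbb{P}(z^k=i)$, $p_i^\infty=\lim_k p_i^k$. For $i\leftrightarrow(s,s')$: $A_i=\phi(s)(\gamma\phi(s')-\phi(s))^\top$, $b_{m,i}=R_m(s,s')\phi(s)$, $B_i=[b_{1,i}\cdots b_{M,i}]$. $\bar A=\sum_ip_i^\infty A_i$ (Hurwitz), $\bar{\mathbf b}=\frac1M\sum_m\sum_ip_i^\infty b_{m,i}$, $\theta^*$ the unique solution of $\bar A\theta^*+\bar{\mathbf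 b}=0$, $\Theta^*=[\theta^*\cdots\theta^*]\in\mathbb{R}^{p\times M}$. $n_\xi=Mp$, $\xi^k=\mathrm{vec}([\theta_1^k-\theta^*\cdots\theta_M^k-\theta^*])$, $\delta^k=\frac1M\mathbb{E}\|\xi^k\|^2$. $H_i=\alpha I_M\otimes A_i+W\otimes I_p$, $G_i=\alpha\,\mathrm{vec}(B_i+A_i\Theta^* )$. $q^k$ stacks $q_i^k=\mathbb{E}[\xi^k\mathbf 1_{\{z^k=i\}}]$; $\hat{\mathbf Q}^k$ stacks $\mathrm{vec}(Q_i^k)$, $Q_i^k=\mathbb{E}[\xi^k(\xi^k)^\top\mathbf 1_{\{z^k=i\}}]$. $\mathcal{H}_{11}$, $\mathcal{H}_{22}$, $\mathcal{H}_{21}$ are $n\times n$ block matrices with $(j,i)$ blocks $p_{ij}H_i$, $p_{ij}H_i\otimes H_i$, $p_{ij}(H_i\otimes G_i+G_i\otimes H_i)$ respectively. The $j$-th block of $u_q^k$ is $\sum_ip_{ij}p_i^kG_i$ and of $u_Q^k$ is $\sum_ip_{ij}p_i^kG_i\otimes G_i$. $C_\delta=\frac1M(\mathbf 1_n^\top\otimes\mathrm{vec}(I_{n_\xi})^\top)$. *)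

theory Defs
  imports "Jordan_Normal_Form.Spectral_Radius" "HOL-Library.FuncSet"
begin

text \<open>States are S = {0..<N}; features phi s j (j<p) are the coordinates of phi(s) in R^p;
  agents are m<M; rewards R m s s'; W m m' is the mixing matrix; P s s' is the transition
  matrix of the state chain and mu0 its initial distribution; theta0 m j are the
  deterministic initial weights.\<close>

record td_sys =
  nst :: nat
  P :: "nat \<Rightarrow> nat \<Rightarrow> real"
  mu0 :: "nat \<Rightarrow> real"
  p :: nat
  phi :: "nat \<Rightarrow> nat \<Rightarrow> real"
  gam :: real
  M :: nat
  R :: "nat \<Rightarrow> nat \<Rightarrow> nat \<Rightarrow> real"
  W :: "nat \<Rightarrow> nat \<Rightarrow> real"
  alpha :: real
  theta0 :: "nat \<Rightarrow> nat \<Rightarrow> real"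

definition stochastic_matrix :: "nat \<Rightarrow> (nat \<Rightarrow> nat \<Rightarrow> real) \<Rightarrow> bool" where
  "stochastic_matrix N Q \<longleftrightarrow> (\<forall>i<N. \<forall>j<N. 0 \<le> Q i j) \<and> (\<forall>i<N. (\<Sum>j<N. Q i j) = 1)"

definition prob_vector :: "nat \<Rightarrow> (nat \<Rightarrow> real) \<Rightarrow> bool" where
  "prob_vector N mu \<longleftrightarrow> (\<forall>i<N. 0 \<le> mu i) \<and> (\<Sum>i<N. mu i) = 1"

fun mstep :: "nat \<Rightarrow> (nat \<Rightarrow> nat \<Rightarrow> real) \<Rightarrow> nat \<Rightarrow> nat \<Rightarrow> nat \<Rightarrow> real" where
  "mstep N Q 0 i j = (if i = j then 1 else 0)"
| "mstep N Q (Suc k) i j = (\<Sum>l<N. mstep N Q k i l * Q l j)"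

definition irreducible_chain :: "nat \<Rightarrow> (nat \<Rightarrow> nat \<Rightarrow> real) \<Rightarrow> bool" where
  "irreducible_chain N Q \<longleftrightarrow> (\<forall>i<N. \<forall>j<N. \<exists>k. 0 < mstep N Q k i j)"

definition aperiodic_chain :: "nat \<Rightarrow> (nat \<Rightarrow> nat \<Rightarrow> real) \<Rightarrow> bool" where
  "aperiodic_chain N Q \<longleftrightarrow> (\<forall>i<N. Gcd {k. 0 < k \<and> 0 < mstep N Q k i i} = (1::nat))"

definition doubly_stochastic01 :: "nat \<Rightarrow> (nat \<Rightarrow> nat \<Rightarrow> real) \<Rightarrow> bool" where
  "doubly_stochastic01 n A \<longleftrightarrow> (\<forall>i<n. \<forall>j<n. 0 \<le> A i j \<and> A i j \<le> 1)
     \<and> (\<forall>i<n. (\<Sum>j<n. A i j) = 1) \<and> (\<forall>j<n. (\<Sum>i<n. A i j) = 1)"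

definition connected_pattern :: "nat \<Rightarrow> (nat \<Rightarrow> nat \<Rightarrow> real) \<Rightarrow> bool" where
  "connected_pattern n A \<longleftrightarrow>
     (\<forall>i<n. \<forall>j<n. i \<noteq> j \<longrightarrow> (A i j \<noteq> 0 \<longleftrightarrow> A j i \<noteq> 0)) \<and>
     (\<forall>i<n. \<forall>j<n. (\<lambda>a b. a < n \<and> b < n \<and> a \<noteq> b \<and> A a b \<noteq> 0)\<^sup>*\<^sup>* i j)"

definition lin_indep_features :: "nat \<Rightarrow> nat \<Rightarrow> (nat \<Rightarrow> nat \<Rightarrow> real) \<Rightarrow> bool" where
  "lin_indep_features N d f \<longleftrightarrow>
     (\<forall>c::nat \<Rightarrow> real. (\<forall>j<d. (\<Sum>s<N. c s * f s j) = 0) \<longrightarrow> (\<forall>s<N. c s = 0))"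

definition paths :: "nat \<Rightarrow> nat \<Rightarrow> (nat \<Rightarrow> nat) set" where
  "paths N K = {0..K} \<rightarrow>\<^sub>E {0..<N}"

definition path_prob :: "td_sys \<Rightarrow> nat \<Rightarrow> (nat \<Rightarrow> nat) \<Rightarrow> real" where
  "path_prob S K \<omega> = mu0 S (\<omega> 0) * (\<Prod>j<K. P S (\<omega> j) (\<omega> (Suc j)))"

definition pexp :: "td_sys \<Rightarrow> nat \<Rightarrow> ((nat \<Rightarrow> nat) \<Rightarrow> real) \<Rightarrow> real" where
  "pexp S K f = (\<Sum>\<omega>\<in>paths (nst S) K. path_prob S K \<omega> * f \<omega>)"

definition nz :: "td_sys \<Rightarrow> nat" where "nz S = nst S * nst S"
definition nxi :: "td_sys \<Rightarrow> nat" where "nxi S = M S * p S"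

definition zidx :: "td_sys \<Rightarrow> nat \<Rightarrow> nat \<Rightarrow> nat" where "zidx S s s' = s * nst S + s'"
definition zfst :: "td_sys \<Rightarrow> nat \<Rightarrow> nat" where "zfst S i = i div nst S"
definition zsnd :: "td_sys \<Rightarrow> nat \<Rightarrow> nat" where "zsnd S i = i mod nst S"

definition zP :: "td_sys \<Rightarrow> nat \<Rightarrow> nat \<Rightarrow> real" where
  "zP S i j = (if zsnd S i = zfst S j then P S (zfst S j) (zsnd S j) else 0)"

definition zind :: "td_sys \<Rightarrow> nat \<Rightarrow> nat \<Rightarrow> (nat \<Rightarrow> nat) \<Rightarrow> real" where
  "zind S k i \<omega> = (if zidx S (\<omega> k) (\<omega> (Suc k)) = i then 1 else 0)"

definition pk :: "td_sys \<Rightarrow> nat \<Rightarrow> nat \<Rightarrow> real" where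
  "pk S k i = pexp S (Suc k) (zind S k i)"

definition pinf :: "td_sys \<Rightarrow> nat \<Rightarrow> real" where
  "pinf S i = lim (\<lambda>k. pk S k i)"

definition Amat :: "td_sys \<Rightarrow> nat \<Rightarrow> real mat" where
  "Amat S i = mat (p S) (p S) (\<lambda>(a,b). phi S (zfst S i) a *
      (gam S * phi S (zsnd S i) b - phi S (zfst S i) b))"

definition bvec :: "td_sys \<Rightarrow> nat \<Rightarrow> nat \<Rightarrow> real vec" where
  "bvec S m i = vec (p S) (\<lambda>a. R S m (zfst S i) (zsnd S i) * phi S (zfst S i) a)"

definition Bmat :: "td_sys \<Rightarrow> nat \<Rightarrow> real mat" where
  "Bmat S i = mat (p S) (M S) (\<lambda>(a,m). bvec S m i $ a)"

definition Abar :: "td_sys \<Rightarrow> real mat" where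
  "Abar S = mat (p S) (p S) (\<lambda>(a,b). \<Sum>i<nz S. pinf S i * Amat S i $$ (a,b))"

definition bbar :: "td_sys \<Rightarrow> real vec" where
  "bbar S = vec (p S) (\<lambda>a. (1 / real (M S)) * (\<Sum>m<M S. \<Sum>i<nz S. pinf S i * bvec S m i $ a))"

definition thstar :: "td_sys \<Rightarrow> real vec" where
  "thstar S = (THE th. th \<in> carrier_vec (p S) \<and> Abar S *\<^sub>v th + bbar S = 0\<^sub>v (p S))"

definition Thstar :: "td_sys \<Rightarrow> real mat" where
  "Thstar S = mat (p S) (M S) (\<lambda>(a,m). thstar S $ a)"

fun theta :: "td_sys \<Rightarrow> nat \<Rightarrow> (nat \<Rightarrow> nat) \<Rightarrow> nat \<Rightarrow> nat \<Rightarrow> real" where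
  "theta S 0 \<omega> m j = theta0 S m j"
| "theta S (Suc k) \<omega> m j =
     (\<Sum>m'<M S. W S m m' * theta S k \<omega> m' j)
     + alpha S * phi S (\<omega> k) j *
       ((\<Sum>l<p S. (gam S * phi S (\<omega> (Suc k)) l - phi S (\<omega> k) l) * theta S k \<omega> m l)
        + R S m (\<omega> k) (\<omega> (Suc k)))"

text \<open>xi^k = vec([theta_1^k - theta*, ..., theta_M^k - theta*]) (column stacking)\<close>
definition xi :: "td_sys \<Rightarrow> nat \<Rightarrow> (nat \<Rightarrow> nat) \<Rightarrow> real vec" where
  "xi S k \<omega> = vec (nxi S) (\<lambda>r. theta S k \<omega> (r div p S) (r mod p S) - thstar S $ (r mod p S))"

definition delta :: "td_sys \<Rightarrow> nat \<Rightarrow> real" where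
  "delta S k = (1 / real (M S)) * pexp S k (\<lambda>\<omega>. \<Sum>r<nxi S. (xi S k \<omega> $ r)\<^sup>2)"

text \<open>q^k stacks q_i^k = E[xi^k 1{z^k=i}]\<close>
definition qv :: "td_sys \<Rightarrow> nat \<Rightarrow> real vec" where
  "qv S k = vec (nz S * nxi S) (\<lambda>r.
     pexp S (Suc k) (\<lambda>\<omega>. xi S k \<omega> $ (r mod nxi S) * zind S k (r div nxi S) \<omega>))"

text \<open>Qhat^k stacks vec(Q_i^k), Q_i^k = E[xi^k xi^k^T 1{z^k=i}]\<close>
definition Qv :: "td_sys \<Rightarrow> nat \<Rightarrow> real vec" where
  "Qv S k = vec (nz S * (nxi S)\<^sup>2) (\<lambda>r.
     pexp S (Suc k) (\<lambda>\<omega>. xi S k \<omega> $ ((r mod (nxi S)\<^sup>2) mod nxi S)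
                        * xi S k \<omega> $ ((r mod (nxi S)\<^sup>2) div nxi S)
                        * zind S k (r div (nxi S)\<^sup>2) \<omega>))"

definition kron :: "real mat \<Rightarrow> real mat \<Rightarrow> real mat" where
  "kron A B = mat (dim_row A * dim_row B) (dim_col A * dim_col B)
     (\<lambda>(i,j). A $$ (i div dim_row B, j div dim_col B) * B $$ (i mod dim_row B, j mod dim_col B))"

text \<open>column-stacking vectorization\<close>
definition vecm :: "real mat \<Rightarrow> real vec" where
  "vecm X = vec (dim_row X * dim_col X) (\<lambda>r. X $$ (r mod dim_row X, r div dim_row X))"

definition col_mat :: "real vec \<Rightarrow> real mat" where
  "col_mat v = mat (dim_vec v) 1 (\<lambda>(i,j). v $ i)"

definition block_mat :: "nat \<Rightarrow> nat \<Rightarrow> nat \<Rightarrow> (nat \<Rightarrow> nat \<Rightarrow> real mat) \<Rightarrow> real mat" where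
  "block_mat n d1 d2 F = mat (n * d1) (n * d2)
     (\<lambda>(r,c). F (r div d1) (c div d2) $$ (r mod d1, c mod d2))"

definition block_vec :: "nat \<Rightarrow> nat \<Rightarrow> (nat \<Rightarrow> real vec) \<Rightarrow> real vec" where
  "block_vec n d F = vec (n * d) (\<lambda>r. F (r div d) $ (r mod d))"

definition minv :: "real mat \<Rightarrow> real mat" where
  "minv A = (SOME B. B \<in> carrier_mat (dim_row A) (dim_row A) \<and> inverts_mat A B \<and> inverts_mat B A)"

definition vec_tendsto :: "(nat \<Rightarrow> real vec) \<Rightarrow> real vec \<Rightarrow> bool" where
  "vec_tendsto f L \<longleftrightarrow> (\<forall>k. dim_vec (f k) = dim_vec L) \<and>
      (\<forall>r<dim_vec L. (\<lambda>k. f k $ r) \<longlonglongrightarrow> L $ r)"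

definition Wmat :: "td_sys \<Rightarrow> real mat" where
  "Wmat S = mat (M S) (M S) (\<lambda>(a,b). W S a b)"

definition Hmat :: "td_sys \<Rightarrow> nat \<Rightarrow> real mat" where
  "Hmat S i = alpha S \<cdot>\<^sub>m kron (1\<^sub>m (M S)) (Amat S i) + kron (Wmat S) (1\<^sub>m (p S))"

definition Gvec :: "td_sys \<Rightarrow> nat \<Rightarrow> real vec" where
  "Gvec S i = alpha S \<cdot>\<^sub>v vecm (Bmat S i + Amat S i * Thstar S)"

definition H11 :: "td_sys \<Rightarrow> real mat" where
  "H11 S = block_mat (nz S) (nxi S) (nxi S) (\<lambda>j i. zP S i j \<cdot>\<^sub>m Hmat S i)"

definition H22 :: "td_sys \<Rightarrow> real mat" where
  "H22 S = block_mat (nz S) ((nxi S)\<^sup>2) ((nxi S)\<^sup>2)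
     (\<lambda>j i. zP S i j \<cdot>\<^sub>m kron (Hmat S i) (Hmat S i))"

definition H21 :: "td_sys \<Rightarrow> real mat" where
  "H21 S = block_mat (nz S) ((nxi S)\<^sup>2) (nxi S)
     (\<lambda>j i. zP S i j \<cdot>\<^sub>m (kron (Hmat S i) (col_mat (Gvec S i)) + kron (col_mat (Gvec S i)) (Hmat S i)))"

definition uq_inf :: "td_sys \<Rightarrow> real vec" where
  "uq_inf S = block_vec (nz S) (nxi S)
     (\<lambda>j. vec (nxi S) (\<lambda>r. \<Sum>i<nz S. zP S i j * pinf S i * Gvec S i $ r))"

definition uQ_inf :: "td_sys \<Rightarrow> real vec" where
  "uQ_inf S = block_vec (nz S) ((nxi S)\<^sup>2)
     (\<lambda>j. vec ((nxi S)\<^sup>2) (\<lambda>r. \<Sum>i<nz S. zP S i j * pinf S i *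
        kron (col_mat (Gvec S i)) (col_mat (Gvec S i)) $$ (r, 0)))"

definition Cdelta :: "td_sys \<Rightarrow> real mat" where
  "Cdelta S = (1 / real (M S)) \<cdot>\<^sub>m
     kron (mat 1 (nz S) (\<lambda>_. 1)) (transpose_mat (col_mat (vecm (1\<^sub>m (nxi S)))))"

definition q_inf :: "td_sys \<Rightarrow> real vec" where
  "q_inf S = minv (1\<^sub>m (nz S * nxi S) - H11 S) *\<^sub>v uq_inf S"

definition Q_inf :: "td_sys \<Rightarrow> real vec" where
  "Q_inf S = minv (1\<^sub>m (nz S * (nxi S)\<^sup>2) - H22 S) *\<^sub>v (H21 S *\<^sub>v q_inf S + uQ_inf S)"

definition delta_inf :: "td_sys \<Rightarrow> real" where
  "delta_inf S = (Cdelta S *\<^sub>v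
     (minv (1\<^sub>m (nz S * (nxi S)\<^sup>2) - H22 S) *\<^sub>v (H21 S *\<^sub>v q_inf S + uQ_inf S))) $ 0"

end

theory Submission
  imports Defs
begin

text \<open>Conditioning on the pair \<open>z\<^sup>k = (s\<^sup>k, s\<^sup>k\<^sup>+\<^sup>1)\<close> and using the Markov property of the trajectory,
  the error recursion \<open>\<xi>\<^sup>k\<^sup>+\<^sup>1 = H\<^sub>z \<xi>\<^sup>k + G\<^sub>z\<close> (with \<open>z = z\<^sup>k\<close>) turns into the affine recursions
  \<open>q\<^sup>k\<^sup>+\<^sup>1 = H\<^sub>1\<^sub>1 q\<^sup>k + u\<^sub>q\<^sup>k\<close> and \<open>Q\<^sup>k\<^sup>+\<^sup>1 = H\<^sub>2\<^sub>2 Q\<^sup>k + H\<^sub>2\<^sub>1 q\<^sup>k + u\<^sub>Q\<^sup>k\<close>. The forcing terms converge because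
  the law of an irreducible aperiodic chain converges (Doeblin's contraction of the oscillation of
  the \<open>k\<close>-step matrix). An affine recursion driven by a matrix \<open>A\<close> whose powers vanish converges to
  \<open>(I - A)\<^sup>-\<^sup>1\<close> applied to the limit forcing. The powers of \<open>H\<^sub>2\<^sub>2\<close> vanish because its spectral radius
  is below one; those of \<open>H\<^sub>1\<^sub>1\<close> vanish because, by a weighted Cauchy--Schwarz inequality along the
  pair chain, the squared entries of \<open>H\<^sub>1\<^sub>1\<^sup>k y\<close> are dominated by diagonal entries of \<open>H\<^sub>2\<^sub>2\<^sup>k\<close>
  applied to the blockwise outer products \<open>y\<^sub>j y\<^sub>j\<^sup>T\<close>. Finally \<open>\<delta>\<^sup>k = C\<^sub>\<delta> Q\<^sup>k\<close>.\<close>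

lemma index_mult_mat_vec_sum:
  assumes "A \<in> carrier_mat n m" "v \<in> carrier_vec m" "i < n"
  shows "(A *\<^sub>v v) $ i = (\<Sum>j<m. A $$ (i,j) * v $ j)"
proof -
  have "(A *\<^sub>v v) $ i = row A i \<bullet> v" using assms by simp
  also have "\<dots> = (\<Sum>j<m. A $$ (i,j) * v $ j)"
    using assms unfolding scalar_prod_def by (intro sum.cong) auto
  finally show ?thesis .
qed

definition norm1 :: "real vec \<Rightarrow> real" where
  "norm1 v = (\<Sum>i<dim_vec v. \<bar>v $ i\<bar>)"

definition mat_abs_sum :: "real mat \<Rightarrow> real" where
  "mat_abs_sum A = (\<Sum>i<dim_row A. \<Sum>j<dim_col A. \<bar>A $$ (i,j)\<bar>)"

lemma norm1_nonneg: "0 \<le> norm1 v"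
  unfolding norm1_def by (auto intro: sum_nonneg)

lemma abs_index_le_norm1: "i < dim_vec v \<Longrightarrow> \<bar>v $ i\<bar> \<le> norm1 v"
  unfolding norm1_def by (rule member_le_sum) auto

lemma norm1_add_le:
  assumes "v \<in> carrier_vec n" "w \<in> carrier_vec n"
  shows "norm1 (v + w) \<le> norm1 v + norm1 w"
proof -
  have "norm1 (v + w) = (\<Sum>i<n. \<bar>v $ i + w $ i\<bar>)"
    unfolding norm1_def using assms by (intro sum.cong) auto
  also have "\<dots> \<le> (\<Sum>i<n. \<bar>v $ i\<bar> + \<bar>w $ i\<bar>)" by (intro sum_mono abs_triangle_ineq)
  also have "\<dots> = norm1 v + norm1 w" using assms unfolding norm1_def by (simp add: sum.distrib)
  finally show ?thesis .
qed

lemma norm1_mult_mat_vec_le: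
  assumes A: "A \<in> carrier_mat n m" and v: "v \<in> carrier_vec m"
  shows "norm1 (A *\<^sub>v v) \<le> mat_abs_sum A * norm1 v"
proof -
  have "norm1 (A *\<^sub>v v) = (\<Sum>i<n. \<bar>\<Sum>j<m. A $$ (i,j) * v $ j\<bar>)"
    unfolding norm1_def using A v
    by (intro sum.cong) (auto simp: index_mult_mat_vec_sum simp del: index_mult_mat_vec)
  also have "\<dots> \<le> (\<Sum>i<n. \<Sum>j<m. \<bar>A $$ (i,j)\<bar> * norm1 v)"
  proof (intro sum_mono)
    fix i
    have "\<bar>\<Sum>j<m. A $$ (i,j) * v $ j\<bar> \<le> (\<Sum>j<m. \<bar>A $$ (i,j) * v $ j\<bar>)" by (rule sum_abs)
    also have "\<dots> \<le> (\<Sum>j<m. \<bar>A $$ (i,j)\<bar> * norm1 v)"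
      using v by (auto simp: abs_mult intro!: sum_mono mult_left_mono abs_index_le_norm1)
    finally show "\<bar>\<Sum>j<m. A $$ (i,j) * v $ j\<bar> \<le> (\<Sum>j<m. \<bar>A $$ (i,j)\<bar> * norm1 v)" .
  qed
  also have "\<dots> = mat_abs_sum A * norm1 v"
    using A unfolding mat_abs_sum_def by (simp add: sum_distrib_right)
  finally show ?thesis .
qed

section \<open>Matrices with vanishing powers\<close>

lemma pow_mat_Suc_mult_vec:
  assumes A: "A \<in> carrier_mat n n" and v: "v \<in> carrier_vec n"
  shows "A ^\<^sub>m Suc k *\<^sub>v v = A ^\<^sub>m k *\<^sub>v (A *\<^sub>v v)"
  using assoc_mult_mat_vec[OF pow_carrier_mat[OF A] A v, of k] by simp

lemma pow_mat_Suc_left: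
  assumes A: "A \<in> carrier_mat n n"
  shows "A ^\<^sub>m Suc k = A * A ^\<^sub>m k"
proof (induction k)
  case 0 show ?case using A by simp
next
  case (Suc k)
  have "A ^\<^sub>m Suc (Suc k) = (A * A ^\<^sub>m k) * A" using Suc by simp
  also have "\<dots> = A * (A ^\<^sub>m k * A)" by (rule assoc_mult_mat[OF A pow_carrier_mat[OF A] A])
  finally show ?case by simp
qed

lemma pow_mat_Suc_left_mult_vec:
  assumes A: "A \<in> carrier_mat n n" and v: "v \<in> carrier_vec n"
  shows "A ^\<^sub>m Suc k *\<^sub>v v = A *\<^sub>v (A ^\<^sub>m k *\<^sub>v v)"
  unfolding pow_mat_Suc_left[OF A] by (rule assoc_mult_mat_vec[OF A pow_carrier_mat[OF A] v])

lemma pow_mat_smult: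
  assumes A: "(A :: 'a :: comm_ring_1 mat) \<in> carrier_mat n n"
  shows "(c \<cdot>\<^sub>m A) ^\<^sub>m k = (c ^ k) \<cdot>\<^sub>m (A ^\<^sub>m k)"
proof (induction k)
  case 0 show ?case using A by (intro eq_matI) auto
next
  case (Suc k)
  have "(c \<cdot>\<^sub>m A) ^\<^sub>m Suc k = ((c ^ k) \<cdot>\<^sub>m (A ^\<^sub>m k)) * (c \<cdot>\<^sub>m A)" using Suc by simp
  also have "\<dots> = (c ^ k) \<cdot>\<^sub>m ((A ^\<^sub>m k) * (c \<cdot>\<^sub>m A))"
    by (rule mult_smult_assoc_mat[OF pow_carrier_mat[OF A] smult_carrier_mat[OF A]])
  also have "(A ^\<^sub>m k) * (c \<cdot>\<^sub>m A) = c \<cdot>\<^sub>m (A ^\<^sub>m k * A)"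
    by (rule mult_smult_distrib[OF pow_carrier_mat[OF A] A])
  also have "(c ^ k) \<cdot>\<^sub>m (c \<cdot>\<^sub>m (A ^\<^sub>m k * A)) = (c ^ Suc k) \<cdot>\<^sub>m (A ^\<^sub>m Suc k)"
    by (intro eq_matI) auto
  finally show ?case .
qed

lemma LIMSEQ_zero_if_abs_le:
  fixes f g :: "nat \<Rightarrow> real"
  assumes "\<And>k. \<bar>f k\<bar> \<le> g k" and "g \<longlonglongrightarrow> 0"
  shows "f \<longlonglongrightarrow> 0"
proof -
  have "(\<lambda>k. \<bar>f k\<bar>) \<longlonglongrightarrow> 0"
  proof (rule tendsto_sandwich[of "\<lambda>_. 0" _ _ g])
    show "\<forall>\<^sub>F k in sequentially. 0 \<le> \<bar>f k\<bar>" "\<forall>\<^sub>F k in sequentially. \<bar>f k\<bar> \<le> g k"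
      using assms(1) by (auto intro: always_eventually)
  qed (use assms(2) in auto)
  then show ?thesis by (simp add: tendsto_rabs_zero_iff)
qed

definition mat_powers_vanish :: "real mat \<Rightarrow> nat \<Rightarrow> bool" where
  "mat_powers_vanish A n \<longleftrightarrow> (\<forall>i<n. \<forall>j<n. (\<lambda>k. (A ^\<^sub>m k) $$ (i,j)) \<longlonglongrightarrow> 0)"

lemma mat_powers_vanish_mult_vec:
  assumes A: "A \<in> carrier_mat n n" and van: "mat_powers_vanish A n"
    and y: "y \<in> carrier_vec n" and i: "i < n"
  shows "(\<lambda>k. (A ^\<^sub>m k *\<^sub>v y) $ i) \<longlonglongrightarrow> 0"
proof -
  have "(\<lambda>k. \<Sum>j<n. (A ^\<^sub>m k) $$ (i,j) * y $ j) \<longlonglongrightarrow> (\<Sum>j<n. 0 * y $ j)"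
    using van i unfolding mat_powers_vanish_def by (intro tendsto_sum tendsto_mult tendsto_const) auto
  then show ?thesis using index_mult_mat_vec_sum[OF pow_carrier_mat[OF A] y i] by (simp del: index_mult_mat_vec)
qed

lemma mat_powers_vanishI:
  assumes A: "A \<in> carrier_mat n n"
    and h: "\<And>y i. y \<in> carrier_vec n \<Longrightarrow> i < n \<Longrightarrow> (\<lambda>k. (A ^\<^sub>m k *\<^sub>v y) $ i) \<longlonglongrightarrow> 0"
  shows "mat_powers_vanish A n"
  unfolding mat_powers_vanish_def
proof (intro allI impI)
  fix i j assume i: "i < n" and j: "j < n"
  have "(A ^\<^sub>m k *\<^sub>v unit_vec n j) $ i = (A ^\<^sub>m k) $$ (i,j)" for k
    using i j unfolding index_mult_mat_vec_sum[OF pow_carrier_mat[OF A] unit_vec_carrier i]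
    by (simp add: unit_vec_def if_distrib cong: if_cong)
  then show "(\<lambda>k. (A ^\<^sub>m k) $$ (i,j)) \<longlonglongrightarrow> 0" using h[of "unit_vec n j" i] i by simp
qed

lemma mat_abs_sum_pow_tendsto_zero:
  assumes A: "A \<in> carrier_mat n n" and van: "mat_powers_vanish A n"
  shows "(\<lambda>k. mat_abs_sum (A ^\<^sub>m k)) \<longlonglongrightarrow> 0"
proof -
  have "(\<lambda>k. \<Sum>i<n. \<Sum>j<n. \<bar>(A ^\<^sub>m k) $$ (i,j)\<bar>) \<longlonglongrightarrow> (\<Sum>i<n. \<Sum>j<n. \<bar>0::real\<bar>)"
    using van unfolding mat_powers_vanish_def by (intro tendsto_sum tendsto_rabs) auto
  moreover have "mat_abs_sum (A ^\<^sub>m k) = (\<Sum>i<n. \<Sum>j<n. \<bar>(A ^\<^sub>m k) $$ (i,j)\<bar>)" for k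
    using pow_carrier_mat[OF A, of k] unfolding mat_abs_sum_def by (metis carrier_matD)
  ultimately show ?thesis by simp
qed

lemma spectral_radius_smult_le:
  assumes A: "A \<in> carrier_mat n n" and n: "0 < n" and c: "c \<noteq> 0"
  shows "spectral_radius (c \<cdot>\<^sub>m A) \<le> norm c * spectral_radius A"
proof -
  have cA: "c \<cdot>\<^sub>m A \<in> carrier_mat n n" using A by simp
  from spectral_radius_mem_max(1)[OF cA n] obtain l
    where l: "l \<in> spectrum (c \<cdot>\<^sub>m A)" "spectral_radius (c \<cdot>\<^sub>m A) = norm l" by auto
  from l(1) obtain v where v: "v \<in> carrier_vec n" "v \<noteq> 0\<^sub>v n" "(c \<cdot>\<^sub>m A) *\<^sub>v v = l \<cdot>\<^sub>v v"
    unfolding spectrum_def eigenvalue_def eigenvector_def using cA by auto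
  have "A *\<^sub>v v = (l / c) \<cdot>\<^sub>v v"
  proof (rule eq_vecI)
    fix i assume "i < dim_vec ((l / c) \<cdot>\<^sub>v v)"
    then have i: "i < n" using v by simp
    have "((c \<cdot>\<^sub>m A) *\<^sub>v v) $ i = c * (A *\<^sub>v v) $ i"
      using i A v(1) by (simp add: scalar_prod_def sum_distrib_left mult.assoc)
    then have "c * (A *\<^sub>v v) $ i = l * v $ i" using v(3) i v(1) by simp
    then show "(A *\<^sub>v v) $ i = ((l / c) \<cdot>\<^sub>v v) $ i" using i v(1) c by (simp add: field_simps)
  qed (use A v in simp)
  then have "l / c \<in> spectrum A" unfolding spectrum_def eigenvalue_def eigenvector_def using v A by auto
  then have "norm (l / c) \<le> spectral_radius A" by (intro spectral_radius_mem_max(2)[OF A n]) auto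
  then show ?thesis using l(2) c by (simp add: norm_divide field_simps)
qed

text \<open>Rescale so that the spectral radius is below one; the Jordan normal form then bounds the powers.\<close>

lemma mat_powers_vanish_if_spectral_radius_less_1:
  fixes A :: "real mat"
  assumes A: "A \<in> carrier_mat n n" and n: "0 < n"
    and sr: "spectral_radius (map_mat complex_of_real A) < 1"
  shows "mat_powers_vanish A n"
proof -
  define Ac where "Ac = map_mat complex_of_real A"
  have Ac: "Ac \<in> carrier_mat n n" unfolding Ac_def using A by simp
  define r where "r = (1 + spectral_radius Ac) / 2"
  have "0 \<le> spectral_radius Ac" using spectral_radius_mem_max(1)[OF Ac n] by auto
  then have r: "0 < r" "r < 1" "spectral_radius Ac < r" using sr unfolding r_def Ac_def by auto
  define c where "c = complex_of_real (1 / r)"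
  have "spectral_radius (c \<cdot>\<^sub>m Ac) \<le> norm c * spectral_radius Ac"
    using r by (intro spectral_radius_smult_le[OF Ac n]) (auto simp: c_def)
  also have "\<dots> < 1" using r by (simp add: c_def norm_divide field_simps)
  finally obtain C where C: "\<And>k. norm_bound ((c \<cdot>\<^sub>m Ac) ^\<^sub>m k) C"
    using spectral_radius_jnf_norm_bound_less_1_upper_triangular[of "c \<cdot>\<^sub>m Ac" n] Ac by auto
  show ?thesis unfolding mat_powers_vanish_def
  proof (intro allI impI)
    fix i j assume i: "i < n" and j: "j < n"
    have bound: "\<bar>(A ^\<^sub>m k) $$ (i,j)\<bar> \<le> C * r ^ k" for k
    proof -
      have "(c \<cdot>\<^sub>m Ac) ^\<^sub>m k = c ^ k \<cdot>\<^sub>m map_mat complex_of_real (A ^\<^sub>m k)"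
        using pow_mat_smult[OF Ac, of c k] unfolding Ac_def by (simp add: of_real_hom.mat_hom_pow[OF A])
      then have "((c \<cdot>\<^sub>m Ac) ^\<^sub>m k) $$ (i,j) = c ^ k * complex_of_real ((A ^\<^sub>m k) $$ (i,j))"
        using i j A by simp
      moreover have "norm (((c \<cdot>\<^sub>m Ac) ^\<^sub>m k) $$ (i,j)) \<le> C"
        using C[of k] i j Ac unfolding norm_bound_def by auto
      ultimately have "norm (c ^ k * complex_of_real ((A ^\<^sub>m k) $$ (i,j))) \<le> C" by simp
      then have "(1/r) ^ k * \<bar>(A ^\<^sub>m k) $$ (i,j)\<bar> \<le> C"
        unfolding c_def using r by (simp add: norm_mult norm_power norm_divide)
      then show ?thesis using r by (simp add: field_simps power_divide)
    qed
    have "(\<lambda>k. C * r ^ k) \<longlonglongrightarrow> 0" using r by (intro tendsto_mult_right_zero LIMSEQ_power_zero) auto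
    then show "(\<lambda>k. (A ^\<^sub>m k) $$ (i,j)) \<longlonglongrightarrow> 0" by (rule LIMSEQ_zero_if_abs_le[OF bound])
  qed
qed

lemma invertible_one_minus_mat:
  assumes A: "A \<in> carrier_mat n n" and van: "mat_powers_vanish A n"
  shows "invertible_mat (1\<^sub>m n - A)"
proof -
  have B: "1\<^sub>m n - A \<in> carrier_mat n n" using A by (simp add: minus_carrier_mat)
  have "det (1\<^sub>m n - A) \<noteq> 0"
  proof
    assume "det (1\<^sub>m n - A) = 0"
    then obtain v where v: "v \<in> carrier_vec n" "v \<noteq> 0\<^sub>v n" "(1\<^sub>m n - A) *\<^sub>v v = 0\<^sub>v n"
      using det_0_iff_vec_prod_zero[OF B] by auto
    have "(1\<^sub>m n - A) *\<^sub>v v = v - A *\<^sub>v v"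
      using minus_mult_distrib_mat_vec[OF one_carrier_mat A v(1)] v(1) by simp
    have fixed: "A *\<^sub>v v = v"
    proof (rule eq_vecI)
      fix i assume "i < dim_vec v"
      then have "v $ i - (A *\<^sub>v v) $ i = 0"
        using arg_cong[OF \<open>(1\<^sub>m n - A) *\<^sub>v v = v - A *\<^sub>v v\<close>, of "\<lambda>w. w $ i"] v A by simp
      then show "(A *\<^sub>v v) $ i = v $ i" by simp
    qed (use A v in simp)
    have "A ^\<^sub>m k *\<^sub>v v = v" for k
      by (induction k) (use A in \<open>simp_all add: assoc_mult_mat_vec[OF pow_carrier_mat[OF A] A v(1)] fixed v(1)\<close>)
    then have "(\<lambda>k. v $ i) \<longlonglongrightarrow> 0" if "i < n" for i
      using mat_powers_vanish_mult_vec[OF A van v(1) that] by simp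
    then have "v = 0\<^sub>v n" using v(1) by (intro eq_vecI) (auto simp: LIMSEQ_const_iff)
    then show False using v(2) by simp
  qed
  from det_non_zero_imp_unit[OF B this]
  obtain C where "C \<in> carrier_mat n n" "C * (1\<^sub>m n - A) = 1\<^sub>m n" "(1\<^sub>m n - A) * C = 1\<^sub>m n"
    unfolding Units_def ring_mat_simps by auto
  then show ?thesis using A unfolding invertible_mat_def inverts_mat_def by auto
qed

lemma minv_inverts:
  assumes B: "B \<in> carrier_mat n n" and inv: "invertible_mat B"
  shows "minv B \<in> carrier_mat n n" "B * minv B = 1\<^sub>m n" "minv B * B = 1\<^sub>m n"
proof -
  from inv obtain C where C: "inverts_mat B C" "inverts_mat C B" unfolding invertible_mat_def by auto
  then have "dim_row C = n" "dim_col C = n" using B unfolding inverts_mat_def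
    by (metis carrier_matD(2) index_mult_mat(3) index_one_mat(3),
        metis carrier_matD(1) index_mult_mat(3) index_one_mat(3))
  then have "C \<in> carrier_mat n n" by auto
  then have "\<exists>C. C \<in> carrier_mat (dim_row B) (dim_row B) \<and> inverts_mat B C \<and> inverts_mat C B"
    using B C by auto
  from someI_ex[OF this, folded minv_def]
  show "minv B \<in> carrier_mat n n" "B * minv B = 1\<^sub>m n" "minv B * B = 1\<^sub>m n"
    using B unfolding inverts_mat_def by auto
qed

section \<open>Affine iterations driven by a matrix with vanishing powers\<close>

lemma LIMSEQ_zero_of_contraction:
  fixes a b :: "nat \<Rightarrow> real"
  assumes a0: "\<And>k. 0 \<le> a k" and rec: "\<And>k. a (Suc k) \<le> \<theta> * a k + b k"
    and b: "b \<longlonglongrightarrow> 0" and \<theta>: "0 \<le> \<theta>" "\<theta> < 1"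
  shows "a \<longlonglongrightarrow> 0"
proof (rule LIMSEQ_I)
  fix e :: real assume e: "0 < e"
  from LIMSEQ_D[OF b, of "e * (1 - \<theta>) / 2"] e \<theta> obtain k0
    where k0: "\<And>k. k \<ge> k0 \<Longrightarrow> \<bar>b k\<bar> < e * (1 - \<theta>) / 2" by auto
  have tail: "a (k0 + t) \<le> \<theta> ^ t * a k0 + e / 2" for t
  proof (induction t)
    case 0 then show ?case using e by simp
  next
    case (Suc t)
    have "a (k0 + Suc t) \<le> \<theta> * (\<theta> ^ t * a k0 + e / 2) + e * (1 - \<theta>) / 2"
      using rec[of "k0 + t"] mult_left_mono[OF Suc \<theta>(1)] k0[of "k0 + t"] by simp
    also have "\<dots> = \<theta> ^ Suc t * a k0 + e / 2" by (simp add: field_simps)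
    finally show ?case .
  qed
  have "(\<lambda>t. \<theta> ^ t * a k0) \<longlonglongrightarrow> 0"
    using \<theta> by (intro tendsto_mult_left_zero LIMSEQ_power_zero) auto
  from LIMSEQ_D[OF this, of "e / 2"] e obtain t0
    where t0: "\<And>t. t \<ge> t0 \<Longrightarrow> \<bar>\<theta> ^ t * a k0\<bar> < e / 2" by auto
  show "\<exists>N. \<forall>n\<ge>N. norm (a n - 0) < e"
  proof (intro exI allI impI)
    fix n assume "k0 + t0 \<le> n"
    then have "a n \<le> \<theta> ^ (n - k0) * a k0 + e / 2" "\<bar>\<theta> ^ (n - k0) * a k0\<bar> < e / 2"
      using tail[of "n - k0"] t0[of "n - k0"] by auto
    then show "norm (a n - 0) < e" using a0[of n] by simp
  qed
qed

text \<open>The weighted orbit sum is a norm in which \<open>A\<close> contracts once \<open>t\<^sup>K\<close> compensates \<open>A\<^sup>K\<close>.\<close>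

definition orbit_norm :: "real mat \<Rightarrow> nat \<Rightarrow> real \<Rightarrow> real vec \<Rightarrow> real" where
  "orbit_norm A K t v = (\<Sum>j<K. t ^ j * norm1 (A ^\<^sub>m j *\<^sub>v v))"

lemma norm1_le_orbit_norm:
  assumes A: "A \<in> carrier_mat n n" and v: "v \<in> carrier_vec n" and K: "0 < K" and t: "0 \<le> t"
  shows "norm1 v \<le> orbit_norm A K t v"
proof -
  have "norm1 v = t ^ 0 * norm1 (A ^\<^sub>m 0 *\<^sub>v v)" using A v by simp
  also have "\<dots> \<le> orbit_norm A K t v"
    unfolding orbit_norm_def using K t by (intro member_le_sum mult_nonneg_nonneg norm1_nonneg) auto
  finally show ?thesis .
qed

lemma orbit_norm_le:
  assumes A: "A \<in> carrier_mat n n" and v: "v \<in> carrier_vec n" and t: "0 \<le> t"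
  shows "orbit_norm A K t v \<le> (\<Sum>j<K. t ^ j * mat_abs_sum (A ^\<^sub>m j)) * norm1 v"
  unfolding orbit_norm_def sum_distrib_right mult.assoc
  using t by (intro sum_mono mult_left_mono norm1_mult_mat_vec_le[OF pow_carrier_mat[OF A] v]) auto

lemma orbit_norm_add_le:
  assumes A: "A \<in> carrier_mat n n" and v: "v \<in> carrier_vec n" and w: "w \<in> carrier_vec n"
    and t: "0 \<le> t"
  shows "orbit_norm A K t (v + w) \<le> orbit_norm A K t v + orbit_norm A K t w"
  unfolding orbit_norm_def sum.distrib[symmetric] distrib_left[symmetric]
  using t mult_add_distrib_mat_vec[OF pow_carrier_mat[OF A] v w]
    norm1_add_le[OF mult_mat_vec_carrier[OF pow_carrier_mat[OF A] v] mult_mat_vec_carrier[OF pow_carrier_mat[OF A] w]]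
  by (intro sum_mono mult_left_mono) auto

lemma orbit_norm_mult_le:
  assumes A: "A \<in> carrier_mat n n" and v: "v \<in> carrier_vec n" and t: "0 < t"
    and tK: "t ^ K * mat_abs_sum (A ^\<^sub>m K) \<le> 1"
  shows "t * orbit_norm A K t (A *\<^sub>v v) \<le> orbit_norm A K t v"
proof -
  define f where "f j = t ^ j * norm1 (A ^\<^sub>m j *\<^sub>v v)" for j
  have "t * orbit_norm A K t (A *\<^sub>v v) = (\<Sum>j<K. f (Suc j))"
    unfolding orbit_norm_def f_def sum_distrib_left
    using pow_mat_Suc_mult_vec[OF A v] by (intro sum.cong) (simp_all add: mult.assoc)
  also have "\<dots> = orbit_norm A K t v + f K - f 0"
    using sum.lessThan_Suc_shift[of f K] sum.lessThan_Suc[of f K] unfolding orbit_norm_def f_def by simp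
  also have "f K \<le> f 0"
  proof -
    have "f K \<le> t ^ K * (mat_abs_sum (A ^\<^sub>m K) * norm1 v)"
      unfolding f_def using t by (intro mult_left_mono norm1_mult_mat_vec_le[OF pow_carrier_mat[OF A] v]) auto
    also have "\<dots> \<le> norm1 v" using mult_right_mono[OF tK norm1_nonneg[of v]] by (simp add: mult.assoc)
    finally show ?thesis using A v by (simp add: f_def)
  qed
  finally show ?thesis by simp
qed

lemma perturbed_iteration_tendsto_zero:
  assumes A: "A \<in> carrier_mat n n" and van: "mat_powers_vanish A n"
    and e: "\<And>k. e k \<in> carrier_vec n" and d: "\<And>k. d k \<in> carrier_vec n"
    and rec: "\<And>k. e (Suc k) = A *\<^sub>v e k + d k"
    and d0: "(\<lambda>k. norm1 (d k)) \<longlonglongrightarrow> 0" and r: "r < n"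
  shows "(\<lambda>k. e k $ r) \<longlonglongrightarrow> 0"
proof -
  from LIMSEQ_D[OF mat_abs_sum_pow_tendsto_zero[OF A van], of "1/2"]
  obtain K0 where K0: "\<And>k. k \<ge> K0 \<Longrightarrow> \<bar>mat_abs_sum (A ^\<^sub>m k)\<bar> < 1/2" by auto
  define K where "K = Suc K0"
  define t where "t = root K 2"
  have K: "0 < K" unfolding K_def by simp
  have t: "1 < t" and tK: "t ^ K = 2" unfolding t_def using K by (simp_all add: real_root_pow_pos2)
  have contr: "t ^ K * mat_abs_sum (A ^\<^sub>m K) \<le> 1" using K0[of K] tK unfolding K_def by simp
  define c where "c = (\<Sum>j<K. t ^ j * mat_abs_sum (A ^\<^sub>m j))"
  define a where "a k = orbit_norm A K t (e k)" for k
  have norm1_le_a: "norm1 (e k) \<le> a k" for k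
    unfolding a_def using t by (intro norm1_le_orbit_norm[OF A e K]) auto
  have a0: "0 \<le> a k" for k using norm1_le_a[of k] norm1_nonneg[of "e k"] by linarith
  have "a (Suc k) \<le> (1 / t) * a k + c * norm1 (d k)" for k
  proof -
    have "a (Suc k) \<le> orbit_norm A K t (A *\<^sub>v e k) + orbit_norm A K t (d k)"
      unfolding a_def rec using t by (intro orbit_norm_add_le[OF A mult_mat_vec_carrier[OF A e] d]) auto
    moreover have "orbit_norm A K t (A *\<^sub>v e k) \<le> (1 / t) * a k"
      using orbit_norm_mult_le[OF A e _ contr] t unfolding a_def by (simp add: field_simps)
    moreover have "orbit_norm A K t (d k) \<le> c * norm1 (d k)"
      unfolding c_def using t by (intro orbit_norm_le[OF A d]) auto
    ultimately show ?thesis by linarith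
  qed
  moreover have "(\<lambda>k. c * norm1 (d k)) \<longlonglongrightarrow> 0" by (rule tendsto_mult_right_zero[OF d0])
  ultimately have "a \<longlonglongrightarrow> 0"
    using t by (intro LIMSEQ_zero_of_contraction[OF a0, where \<theta> = "1 / t" and b = "\<lambda>k. c * norm1 (d k)"]) auto
  moreover have "\<bar>e k $ r\<bar> \<le> a k" for k
    using abs_index_le_norm1[of r "e k"] e[of k] r norm1_le_a[of k] by simp
  ultimately show ?thesis by (rule LIMSEQ_zero_if_abs_le[rotated])
qed

lemma affine_iteration_tendsto:
  assumes A: "A \<in> carrier_mat n n" and van: "mat_powers_vanish A n"
    and x: "\<And>k. x k \<in> carrier_vec n" and u: "\<And>k. u k \<in> carrier_vec n"
    and rec: "\<And>k. x (Suc k) = A *\<^sub>v x k + u k"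
    and u_lim: "u_lim \<in> carrier_vec n" and u_tendsto: "\<And>r. r < n \<Longrightarrow> (\<lambda>k. u k $ r) \<longlonglongrightarrow> u_lim $ r"
  shows "vec_tendsto x (minv (1\<^sub>m n - A) *\<^sub>v u_lim)"
proof -
  note B = minv_inverts[OF minus_carrier_mat[OF A] invertible_one_minus_mat[OF A van]]
  define x_lim where "x_lim = minv (1\<^sub>m n - A) *\<^sub>v u_lim"
  have x_lim: "x_lim \<in> carrier_vec n" unfolding x_lim_def using B(1) u_lim by simp
  have "(1\<^sub>m n - A) *\<^sub>v x_lim = u_lim"
    unfolding x_lim_def assoc_mult_mat_vec[OF minus_carrier_mat[OF A] B(1) u_lim, symmetric] B(2)
    using u_lim by simp
  then have "u_lim = x_lim - A *\<^sub>v x_lim"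
    using minus_mult_distrib_mat_vec[OF one_carrier_mat A x_lim] x_lim by simp
  then have fixed: "x_lim $ i = (A *\<^sub>v x_lim) $ i + u_lim $ i" if "i < n" for i
    using that A x_lim by simp
  define e where "e k = x k - x_lim" for k
  have e: "e k \<in> carrier_vec n" for k unfolding e_def using x x_lim by simp
  have d: "u k - u_lim \<in> carrier_vec n" for k using u u_lim by simp
  have "e (Suc k) = A *\<^sub>v e k + (u k - u_lim)" for k
    unfolding e_def rec mult_minus_distrib_mat_vec[OF A x x_lim]
    using A x[of k] x_lim u[of k] u_lim fixed by (intro eq_vecI) auto
  moreover have "(\<lambda>k. norm1 (u k - u_lim)) \<longlonglongrightarrow> 0"
  proof -
    have "(\<lambda>k. \<Sum>r<n. \<bar>u k $ r - u_lim $ r\<bar>) \<longlonglongrightarrow> (\<Sum>r<n. \<bar>u_lim $ r - u_lim $ r\<bar>)"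
      using u_tendsto by (intro tendsto_sum tendsto_rabs tendsto_diff tendsto_const) auto
    then show ?thesis unfolding norm1_def using u u_lim by simp
  qed
  ultimately have "(\<lambda>k. e k $ r) \<longlonglongrightarrow> 0" if "r < n" for r
    by (rule perturbed_iteration_tendsto_zero[OF A van e d _ _ that])
  then have "(\<lambda>k. x k $ r) \<longlonglongrightarrow> x_lim $ r" if "r < n" for r
    using that x x_lim unfolding e_def by (simp add: LIM_zero_iff)
  then show ?thesis unfolding vec_tendsto_def x_lim_def[symmetric] using x x_lim by auto
qed

lemma mult_mat_vec_tendsto:
  assumes A: "A \<in> carrier_mat m n" and x: "vec_tendsto x L" and L: "L \<in> carrier_vec n" and i: "i < m"
  shows "(\<lambda>k. (A *\<^sub>v x k) $ i) \<longlonglongrightarrow> (A *\<^sub>v L) $ i"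
proof -
  have x_car: "x k \<in> carrier_vec n" for k using x L unfolding vec_tendsto_def carrier_vec_def by auto
  have "(\<lambda>k. \<Sum>j<n. A $$ (i,j) * x k $ j) \<longlonglongrightarrow> (\<Sum>j<n. A $$ (i,j) * L $ j)"
    using x L unfolding vec_tendsto_def by (intro tendsto_sum tendsto_mult tendsto_const) auto
  then show ?thesis using A L x_car i by (simp add: index_mult_mat_vec_sum del: index_mult_mat_vec)
qed

section \<open>Convergence of irreducible aperiodic Markov chains\<close>

lemma mstep_nonneg:
  assumes st: "stochastic_matrix N Q" and j: "j < N"
  shows "0 \<le> mstep N Q k i j"
  using j
proof (induction k arbitrary: j)
  case (Suc k)
  then show ?case using st unfolding stochastic_matrix_def by (auto intro!: sum_nonneg mult_nonneg_nonneg)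
qed simp

lemma mstep_row_sum:
  assumes st: "stochastic_matrix N Q" and i: "i < N"
  shows "(\<Sum>j<N. mstep N Q k i j) = 1"
proof (induction k)
  case 0 show ?case using i by simp
next
  case (Suc k)
  have "(\<Sum>j<N. mstep N Q (Suc k) i j) = (\<Sum>l<N. \<Sum>j<N. mstep N Q k i l * Q l j)"
    by (simp add: sum.swap[of "\<lambda>j l. mstep N Q k i l * Q l j"])
  also have "\<dots> = (\<Sum>l<N. mstep N Q k i l * (\<Sum>j<N. Q l j))" by (simp only: sum_distrib_left)
  also have "\<dots> = (\<Sum>l<N. mstep N Q k i l)" using st unfolding stochastic_matrix_def by simp
  finally show ?case using Suc by simp
qed

lemma mstep_add:
  assumes j: "j < N"
  shows "mstep N Q (a + b) i j = (\<Sum>l<N. mstep N Q a i l * mstep N Q b l j)"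
  using j
proof (induction b arbitrary: j)
  case 0
  then show ?case by (simp add: if_distrib cong: if_cong)
next
  case (Suc b)
  have "mstep N Q (a + Suc b) i j = (\<Sum>l'<N. (\<Sum>l<N. mstep N Q a i l * mstep N Q b l l') * Q l' j)"
    using Suc.IH by simp
  also have "\<dots> = (\<Sum>l'<N. \<Sum>l<N. mstep N Q a i l * (mstep N Q b l l' * Q l' j))"
    by (simp only: sum_distrib_right mult.assoc)
  also have "\<dots> = (\<Sum>l<N. \<Sum>l'<N. mstep N Q a i l * (mstep N Q b l l' * Q l' j))" by (rule sum.swap)
  also have "\<dots> = (\<Sum>l<N. mstep N Q a i l * (\<Sum>l'<N. mstep N Q b l l' * Q l' j))"
    by (simp only: sum_distrib_left)
  finally show ?case by simp
qed

lemma mstep_mult_le: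
  assumes st: "stochastic_matrix N Q" and j: "j < N" and l: "l < N"
  shows "mstep N Q a i l * mstep N Q b l j \<le> mstep N Q (a + b) i j"
  unfolding mstep_add[OF j] using l st j
  by (intro member_le_sum[of l "{..<N}" "\<lambda>l. mstep N Q a i l * mstep N Q b l j"])
     (auto intro!: mult_nonneg_nonneg mstep_nonneg)

lemma add_closed_Suc_mult_mem:
  assumes closed: "\<And>x y. x \<in> S \<Longrightarrow> y \<in> S \<Longrightarrow> x + y \<in> S" and x: "x \<in> S"
  shows "Suc m * x \<in> S"
  by (induction m) (use x closed in \<open>simp_all add: add.commute\<close>)

text \<open>The least positive difference \<open>g\<close> of two elements divides every element: otherwise the
  remainder of some \<open>s\<close> modulo \<open>g\<close> would be a smaller difference.\<close>

lemma add_closed_Gcd_1_consecutive: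
  fixes S :: "nat set"
  assumes pos: "\<And>x. x \<in> S \<Longrightarrow> 0 < x"
    and closed: "\<And>x y. x \<in> S \<Longrightarrow> y \<in> S \<Longrightarrow> x + y \<in> S"
    and Gcd: "Gcd S = 1"
  shows "\<exists>x\<in>S. x + 1 \<in> S"
proof -
  obtain a where a: "a \<in> S" using Gcd by fastforce
  define D where "D = {d. 0 < d \<and> (\<exists>x\<in>S. x + d \<in> S)}"
  have "a \<in> D" unfolding D_def using a pos[OF a] closed[OF a a] by auto
  define g where "g = (LEAST d. d \<in> D)"
  have gD: "g \<in> D" unfolding g_def using \<open>a \<in> D\<close> by (rule LeastI)
  from gD obtain x0 where x0: "x0 \<in> S" "x0 + g \<in> S" and g0: "0 < g" unfolding D_def by auto
  have "g dvd s" if s: "s \<in> S" for s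
  proof -
    define q r where "q = s div g" and "r = s mod g"
    have s_eq: "s = q * g + r" and r: "r < g" unfolding q_def r_def using g0 by simp_all
    have "(s + Suc q * x0) + (g - r) = Suc q * (x0 + g)" using s_eq r by (simp add: algebra_simps)
    moreover have "s + Suc q * x0 \<in> S" "Suc q * (x0 + g) \<in> S"
      using closed[OF s add_closed_Suc_mult_mem[OF closed x0(1)]] add_closed_Suc_mult_mem[OF closed x0(2)]
      by auto
    ultimately have "g - r \<in> D" unfolding D_def using r by (auto intro!: bexI[of _ "s + Suc q * x0"])
    then have "g \<le> g - r" unfolding g_def by (rule Least_le)
    then have "r = 0" using r by arith
    then show ?thesis unfolding r_def by auto
  qed
  then have "g dvd Gcd S" by (intro Gcd_greatest) auto
  then have "g = 1" using Gcd by simp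
  then show ?thesis using x0 by auto
qed

text \<open>Every \<open>n \<ge> x\<^sup>2\<close> is \<open>(q - r) x + r (x + 1)\<close> with \<open>n = q x + r\<close>, \<open>r < x \<le> q\<close>.\<close>

lemma add_closed_consecutive_contains_large:
  fixes S :: "nat set"
  assumes closed: "\<And>x y. x \<in> S \<Longrightarrow> y \<in> S \<Longrightarrow> x + y \<in> S"
    and x: "x \<in> S" "x + 1 \<in> S" and x0: "0 < x" and n: "x * x \<le> n"
  shows "n \<in> S"
proof -
  define q r where "q = n div x" and "r = n mod x"
  have r: "r < x" unfolding r_def using x0 by simp
  have n_qr: "n = q * x + r" unfolding q_def r_def by simp
  have q: "x \<le> q"
  proof (rule ccontr)
    assume "\<not> x \<le> q"
    then have "(q + 1) * x \<le> x * x" by (intro mult_right_mono) auto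
    then show False using n n_qr r by (simp add: algebra_simps)
  qed
  have "(q - r) * x + r * x = q * x" using q r by (simp add: add_mult_distrib[symmetric])
  then have n_eq: "n = (q - r) * x + r * (x + 1)" using n_qr by (simp add: algebra_simps)
  have qr: "(q - r) * x \<in> S"
    using add_closed_Suc_mult_mem[OF closed x(1), of "q - r - 1"] q r by (simp add: Suc_diff_Suc)
  show ?thesis
  proof (cases "r = 0")
    case True then show ?thesis using qr n_eq by simp
  next
    case False
    then have "r * (x + 1) \<in> S" using add_closed_Suc_mult_mem[OF closed x(2), of "r - 1"] by simp
    then show ?thesis using closed[OF qr] n_eq by simp
  qed
qed

lemma return_times_eventually:
  assumes st: "stochastic_matrix N Q" and ap: "aperiodic_chain N Q" and i: "i < N"
  shows "\<exists>K. \<forall>k\<ge>K. 0 < mstep N Q k i i"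
proof -
  define S where "S = {k. 0 < k \<and> 0 < mstep N Q k i i}"
  have closed: "x + y \<in> S" if "x \<in> S" "y \<in> S" for x y
    using mstep_mult_le[OF st i i, of x i y] that unfolding S_def
    by (auto intro: less_le_trans[OF mult_pos_pos])
  have Gcd: "Gcd S = 1" using ap i unfolding aperiodic_chain_def S_def by auto
  from add_closed_Gcd_1_consecutive[OF _ closed Gcd] obtain x where "x \<in> S" "x + 1 \<in> S"
    unfolding S_def by auto
  with add_closed_consecutive_contains_large[OF closed this] show ?thesis
    unfolding S_def by auto
qed

text \<open>Return to \<open>i\<close> in \<open>K - h i j\<close> steps, then go from \<open>i\<close> to \<open>j\<close> in \<open>h i j\<close> steps.\<close>

lemma irreducible_aperiodic_mstep_pos:
  assumes st: "stochastic_matrix N Q" and irr: "irreducible_chain N Q" and ap: "aperiodic_chain N Q"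
  shows "\<exists>K. \<forall>i<N. \<forall>j<N. 0 < mstep N Q K i j"
proof -
  obtain R where R: "\<And>i k. i < N \<Longrightarrow> R i \<le> k \<Longrightarrow> 0 < mstep N Q k i i"
    using return_times_eventually[OF st ap] by metis
  obtain h where h: "\<And>i j. i < N \<Longrightarrow> j < N \<Longrightarrow> 0 < mstep N Q (h i j) i j"
    using irr unfolding irreducible_chain_def by metis
  define K where "K = (\<Sum>i<N. R i) + (\<Sum>i<N. \<Sum>j<N. h i j)"
  show ?thesis
  proof (intro exI allI impI)
    fix i j assume i: "i < N" and j: "j < N"
    have "R i \<le> (\<Sum>i<N. R i)" "h i j \<le> (\<Sum>j<N. h i j)" "(\<Sum>j<N. h i j) \<le> (\<Sum>i<N. \<Sum>j<N. h i j)"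
      using i j by (auto intro!: member_le_sum[of _ "{..<N}"])
    then have K: "K = (K - h i j) + h i j" "R i \<le> K - h i j" unfolding K_def by linarith+
    have "0 < mstep N Q (K - h i j) i i * mstep N Q (h i j) i j" using R[OF i K(2)] h[OF i j] by simp
    also have "\<dots> \<le> mstep N Q K i j" using mstep_mult_le[OF st j i] K(1) by metis
    finally show "0 < mstep N Q K i j" .
  qed
qed

lemma weighted_sum_bounds:
  fixes v x :: "nat \<Rightarrow> real"
  assumes v: "\<And>l. l < N \<Longrightarrow> 0 \<le> v l" and x: "\<And>l. l < N \<Longrightarrow> lo \<le> x l \<and> x l \<le> hi"
  shows "(\<Sum>l<N. v l) * lo \<le> (\<Sum>l<N. v l * x l)" "(\<Sum>l<N. v l * x l) \<le> (\<Sum>l<N. v l) * hi"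
  unfolding sum_distrib_right using v x by (auto intro!: sum_mono mult_left_mono)

lemma doeblin_ineq:
  fixes w w' x :: "nat \<Rightarrow> real"
  assumes w: "\<And>l. l < N \<Longrightarrow> e \<le> w l" and w': "\<And>l. l < N \<Longrightarrow> e \<le> w' l"
    and sw: "(\<Sum>l<N. w l) = 1" and sw': "(\<Sum>l<N. w' l) = 1"
    and x: "\<And>l. l < N \<Longrightarrow> lo \<le> x l \<and> x l \<le> hi"
  shows "(\<Sum>l<N. w l * x l) - (\<Sum>l<N. w' l * x l) \<le> (1 - N * e) * (hi - lo)"
proof -
  have "(\<Sum>l<N. (w l - e) * x l) \<le> (\<Sum>l<N. w l - e) * hi"
    using w x by (intro weighted_sum_bounds(2)) auto
  moreover have "(\<Sum>l<N. w' l - e) * lo \<le> (\<Sum>l<N. (w' l - e) * x l)"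
    using w' x by (intro weighted_sum_bounds(1)) auto
  moreover have "(\<Sum>l<N. (v l - e) * x l) = (\<Sum>l<N. v l * x l) - e * (\<Sum>l<N. x l)" for v
    by (simp add: left_diff_distrib sum_subtractf sum_distrib_left)
  ultimately show ?thesis using sw sw' by (simp add: sum_subtractf algebra_simps)
qed

lemma decseq_contraction_tendsto_zero:
  fixes D :: "nat \<Rightarrow> real"
  assumes D0: "\<And>k. 0 \<le> D k" and dec: "decseq D"
    and contr: "\<And>k. D (k + K) \<le> \<rho> * D k" and \<rho>: "0 \<le> \<rho>" "\<rho> < 1"
  shows "D \<longlonglongrightarrow> 0"
proof -
  obtain L where L: "D \<longlonglongrightarrow> L" using decseq_convergent[OF dec, of 0] D0 by blast
  have "L \<le> \<rho> * L"
    using LIMSEQ_ignore_initial_segment[OF L, of K] tendsto_mult_left[OF L, of \<rho>] contr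
    by (intro LIMSEQ_le) auto
  moreover have "0 \<le> L" using D0 by (intro LIMSEQ_le_const[OF L]) auto
  ultimately have "L = 0" using \<rho> by (smt (verit) mult_le_cancel_right1)
  then show ?thesis using L by simp
qed

lemma irreducible_aperiodic_mstep_lower_bound:
  assumes N: "0 < N" and st: "stochastic_matrix N Q" and irr: "irreducible_chain N Q"
    and ap: "aperiodic_chain N Q"
  shows "\<exists>K. \<exists>e::real. 0 < e \<and> N * e \<le> 1 \<and> (\<forall>a<N. \<forall>b<N. e \<le> mstep N Q K a b)"
proof -
  obtain K where K: "\<And>a b. a < N \<Longrightarrow> b < N \<Longrightarrow> 0 < mstep N Q K a b"
    using irreducible_aperiodic_mstep_pos[OF st irr ap] by blast
  define e where "e = Min ((\<lambda>(a,b). mstep N Q K a b) ` ({..<N} \<times> {..<N}))"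
  have e_le: "e \<le> mstep N Q K a b" if "a < N" "b < N" for a b
    unfolding e_def using that by (intro Min_le) auto
  have "e \<in> (\<lambda>(a,b). mstep N Q K a b) ` ({..<N} \<times> {..<N})"
    unfolding e_def using N by (intro Min_in) auto
  then have "0 < e" using K by auto
  moreover have "(\<Sum>l<N. e) \<le> (\<Sum>l<N. mstep N Q K 0 l)" using e_le N by (intro sum_mono) auto
  then have "N * e \<le> 1" using mstep_row_sum[OF st N] by simp
  ultimately show ?thesis using e_le by blast
qed

lemma convergent_squeeze:
  fixes lo hi x :: "nat \<Rightarrow> real"
  assumes "incseq lo" "\<And>k. lo k \<le> x k" "\<And>k. x k \<le> hi k" "\<And>k. lo k \<le> B"
    and "(\<lambda>k. hi k - lo k) \<longlonglongrightarrow> 0"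
  shows "convergent x"
proof -
  obtain L where L: "lo \<longlonglongrightarrow> L" using incseq_convergent[of lo B] assms(1,4) by blast
  have "(\<lambda>k. lo k + (hi k - lo k)) \<longlonglongrightarrow> L" using tendsto_add[OF L assms(5)] by simp
  with L have "x \<longlonglongrightarrow> L"
    by (rule tendsto_sandwich[rotated 2]) (use assms(2,3) in \<open>auto intro: always_eventually\<close>)
  then show ?thesis unfolding convergent_def by blast
qed

text \<open>The oscillation \<open>hi k - lo k\<close> of column \<open>j\<close> of the \<open>k\<close>-step matrix is non-increasing and, by
  Doeblin's bound, contracts by \<open>1 - N e\<close> every \<open>K\<close> steps, where all \<open>K\<close>-step entries are \<open>\<ge> e\<close>.\<close>

lemma mstep_convergent:
  assumes N: "0 < N" and st: "stochastic_matrix N Q" and irr: "irreducible_chain N Q"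
    and ap: "aperiodic_chain N Q" and i0: "i0 < N" and j: "j < N"
  shows "convergent (\<lambda>k. mstep N Q k i0 j)"
proof -
  obtain K and e :: real where e_pos: "0 < e" and Ne: "N * e \<le> 1"
    and e_le: "\<And>a b. a < N \<Longrightarrow> b < N \<Longrightarrow> e \<le> mstep N Q K a b"
    using irreducible_aperiodic_mstep_lower_bound[OF N st irr ap] by auto
  define X where "X k l = mstep N Q k l j" for k l
  define hi where "hi k = Max (X k ` {..<N})" for k
  define lo where "lo k = Min (X k ` {..<N})" for k
  have bnd: "lo k \<le> X k l \<and> X k l \<le> hi k" if "l < N" for k l
    unfolding hi_def lo_def using that by (auto intro: Min_le Max_ge)
  have nonempty: "X k ` {..<N} \<noteq> {}" for k using N by auto
  have hi_in: "\<exists>l<N. X k l = hi k" and lo_in: "\<exists>l<N. X k l = lo k" for k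
    using Max_in[OF _ nonempty[of k]] Min_in[OF _ nonempty[of k]] unfolding hi_def lo_def by auto
  have shift: "X (t + k) i = (\<Sum>l<N. mstep N Q t i l * X k l)" for t k i
    unfolding X_def by (rule mstep_add[OF j])
  have conv: "lo k \<le> X (t + k) i \<and> X (t + k) i \<le> hi k" if i: "i < N" for t k i
    using weighted_sum_bounds[where N = N and v = "mstep N Q t i" and x = "X k" and lo = "lo k" and hi = "hi k"]
      bnd mstep_nonneg[OF st] mstep_row_sum[OF st i, of t]
    unfolding shift by auto
  have hi_mono: "hi (t + k) \<le> hi k" for t k using hi_in[of "t + k"] conv by metis
  have lo_mono: "lo k \<le> lo (t + k)" for t k using lo_in[of "t + k"] conv by metis
  define D where "D k = hi k - lo k" for k
  have "D \<longlonglongrightarrow> 0"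
  proof (rule decseq_contraction_tendsto_zero)
    show "0 \<le> D k" for k unfolding D_def using bnd[OF N, of k] by linarith
    show "decseq D" using hi_mono[of 1] lo_mono[of _ 1] unfolding D_def by (intro decseq_SucI) (simp add: diff_mono)
    show "D (k + K) \<le> (1 - N * e) * D k" for k
    proof -
      obtain a b where ab: "a < N" "X (K + k) a = hi (K + k)" "b < N" "X (K + k) b = lo (K + k)"
        using hi_in lo_in by blast
      have "X (K + k) a - X (K + k) b \<le> (1 - N * e) * D k"
        unfolding shift D_def using ab(1,3)
        by (intro doeblin_ineq[OF e_le e_le mstep_row_sum[OF st] mstep_row_sum[OF st] bnd])
      then show ?thesis using ab unfolding D_def by (simp add: add.commute)
    qed
  qed (use Ne e_pos N in auto)
  moreover have "incseq lo" using lo_mono[of _ 1] by (simp add: incseq_SucI)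
  moreover have "lo k \<le> hi 0" for k using bnd[OF N] hi_mono[of k 0] by (metis add_0_right order_trans)
  ultimately have "convergent (\<lambda>k. X k i0)"
    using bnd[OF i0] unfolding D_def by (rule_tac convergent_squeeze[where lo = lo and hi = hi and B = "hi 0"]) auto
  then show ?thesis unfolding X_def .
qed

lemma sum_lessThan_mult_eq:
  fixes f :: "nat \<Rightarrow> 'a::comm_monoid_add"
  shows "(\<Sum>x<n * d. f x) = (\<Sum>i<n. \<Sum>c<d. f (i * d + c))"
proof -
  have "(\<Sum>x<n * d. f x) = (\<Sum>i<n. sum f {i * d..<i * d + d})" by (rule sum.nat_group[symmetric])
  also have "\<dots> = (\<Sum>i<n. \<Sum>c<d. f (i * d + c))"
    using sum.shift_bounds_nat_ivl[of f 0 "_ * d" d] by (simp add: atLeast0LessThan add.commute)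
  finally show ?thesis .
qed

lemma mult_add_less_mult:
  assumes "j < n" "a < (d::nat)"
  shows "j * d + a < n * d"
proof -
  have "j * d + a < Suc j * d" using assms by simp
  also have "\<dots> \<le> n * d" using assms by (intro mult_right_mono) auto
  finally show ?thesis .
qed

lemma index_decomp:
  assumes "r < Z * (n::nat)"
  shows "r div n < Z" "r mod n < n" "r = r div n * n + r mod n"
proof -
  have "0 < n" using assms by (cases n) auto
  then show "r div n < Z" "r mod n < n" "r = r div n * n + r mod n"
    using assms by (simp_all add: less_mult_imp_div_less)
qed

lemma block_mat_carrier: "block_mat n d1 d2 F \<in> carrier_mat (n * d1) (n * d2)"
  unfolding block_mat_def by simp

lemma block_mat_dims:
  "dim_row (block_mat n d1 d2 F) = n * d1" "dim_col (block_mat n d1 d2 F) = n * d2"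
  unfolding block_mat_def by simp_all

lemma block_mat_index:
  assumes "j < n" "a < d1" "i < n" "c < d2"
  shows "block_mat n d1 d2 F $$ (j * d1 + a, i * d2 + c) = F j i $$ (a, c)"
  using assms mult_add_less_mult[of j n a d1] mult_add_less_mult[of i n c d2]
  unfolding block_mat_def by simp

lemma block_mat_mult_vec_index:
  assumes j: "j < n" and a: "a < d1" and v: "v \<in> carrier_vec (n * d2)"
  shows "(block_mat n d1 d2 F *\<^sub>v v) $ (j * d1 + a) = (\<Sum>i<n. \<Sum>c<d2. F j i $$ (a,c) * v $ (i * d2 + c))"
  unfolding index_mult_mat_vec_sum[OF block_mat_carrier v mult_add_less_mult[OF j a]] sum_lessThan_mult_eq
  by (intro sum.cong refl) (simp add: block_mat_index[OF j a])

lemma index_div_eq: "a < d \<Longrightarrow> (j * d + a) div (d::nat) = j"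
  and index_mod_eq: "a < d \<Longrightarrow> (j * d + a) mod (d::nat) = a"
  by simp_all

lemma block_vec_carrier: "block_vec n d F \<in> carrier_vec (n * d)"
  unfolding block_vec_def by simp

lemma block_vec_index: "j < n \<Longrightarrow> a < d \<Longrightarrow> block_vec n d F $ (j * d + a) = F j $ a"
  using mult_add_less_mult[of j n a d] unfolding block_vec_def by simp

lemma kron_carrier: "kron A B \<in> carrier_mat (dim_row A * dim_row B) (dim_col A * dim_col B)"
  unfolding kron_def by simp

lemma kron_dims:
  "dim_row (kron A B) = dim_row A * dim_row B" "dim_col (kron A B) = dim_col A * dim_col B"
  unfolding kron_def by simp_all

lemma kron_index:
  assumes "i < dim_row A * dim_row B" "j < dim_col A * dim_col B"
  shows "kron A B $$ (i,j) = A $$ (i div dim_row B, j div dim_col B) * B $$ (i mod dim_row B, j mod dim_col B)"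
  using assms unfolding kron_def by simp

lemma kron_self_index:
  assumes H: "H \<in> carrier_mat n n" and "a1 < n" "a2 < n" "c < n" "d < n"
  shows "kron H H $$ (a2 * n + a1, d * n + c) = H $$ (a2, d) * H $$ (a1, c)"
  using assms mult_add_less_mult[of a2 n a1 n] mult_add_less_mult[of d n c n] by (simp add: kron_index)

section \<open>Second moments dominate first moments\<close>

definition first_moment_mat :: "nat \<Rightarrow> nat \<Rightarrow> (nat \<Rightarrow> nat \<Rightarrow> real) \<Rightarrow> (nat \<Rightarrow> real mat) \<Rightarrow> real mat" where
  "first_moment_mat Z n pp Hf = block_mat Z n n (\<lambda>j i. pp i j \<cdot>\<^sub>m Hf i)"

definition second_moment_mat :: "nat \<Rightarrow> nat \<Rightarrow> (nat \<Rightarrow> nat \<Rightarrow> real) \<Rightarrow> (nat \<Rightarrow> real mat) \<Rightarrow> real mat" where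
  "second_moment_mat Z n pp Hf = block_mat Z (n * n) (n * n) (\<lambda>j i. pp i j \<cdot>\<^sub>m kron (Hf i) (Hf i))"

text \<open>Block \<open>j\<close> of a second-moment vector is a column-stacked \<open>n \<times> n\<close> matrix \<open>Y\<^sub>j\<close>;
  \<open>block_quad\<close> is the quadratic form \<open>v\<^sup>T Y\<^sub>j v\<close> and \<open>block_outer\<close> stacks the products \<open>y\<^sub>j y\<^sub>j\<^sup>T\<close>.\<close>

definition block_lin :: "nat \<Rightarrow> nat \<Rightarrow> (nat \<Rightarrow> real) \<Rightarrow> real vec \<Rightarrow> real" where
  "block_lin n j v y = (\<Sum>c<n. v c * y $ (j * n + c))"

definition block_quad :: "nat \<Rightarrow> nat \<Rightarrow> (nat \<Rightarrow> real) \<Rightarrow> real vec \<Rightarrow> real" where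
  "block_quad n j v Y = (\<Sum>d<n. \<Sum>c<n. v c * v d * Y $ (j * (n * n) + (d * n + c)))"

definition block_outer :: "nat \<Rightarrow> nat \<Rightarrow> real vec \<Rightarrow> real vec" where
  "block_outer Z n y = vec (Z * (n * n)) (\<lambda>r. y $ (r div (n * n) * n + r mod (n * n) mod n)
                                            * y $ (r div (n * n) * n + r mod (n * n) div n))"

text \<open>Total mass at \<open>j\<close> after \<open>k\<close> steps of the chain \<open>pp\<close> started from the counting measure.\<close>

fun column_mass :: "nat \<Rightarrow> (nat \<Rightarrow> nat \<Rightarrow> real) \<Rightarrow> nat \<Rightarrow> nat \<Rightarrow> real" where
  "column_mass Z pp 0 j = 1"
| "column_mass Z pp (Suc k) j = (\<Sum>i<Z. pp i j * column_mass Z pp k i)"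

lemma column_mass_nonneg:
  assumes "\<And>i j. i < Z \<Longrightarrow> j < Z \<Longrightarrow> 0 \<le> pp i j" and "j < Z"
  shows "0 \<le> column_mass Z pp k j"
  using assms(2) by (induction k arbitrary: j) (auto simp: assms(1) intro!: sum_nonneg)

lemma column_mass_le:
  assumes nonneg: "\<And>i j. i < Z \<Longrightarrow> j < Z \<Longrightarrow> 0 \<le> pp i j"
    and rows: "\<And>i. i < Z \<Longrightarrow> (\<Sum>j<Z. pp i j) = 1" and j: "j < Z"
  shows "column_mass Z pp k j \<le> Z"
proof -
  have "(\<Sum>j<Z. column_mass Z pp k j) = Z"
  proof (induction k)
    case (Suc k)
    have "(\<Sum>j<Z. column_mass Z pp (Suc k) j) = (\<Sum>i<Z. \<Sum>j<Z. pp i j * column_mass Z pp k i)"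
      by (simp add: sum.swap[of "\<lambda>j i. pp i j * column_mass Z pp k i"])
    also have "\<dots> = (\<Sum>i<Z. (\<Sum>j<Z. pp i j) * column_mass Z pp k i)"
      by (simp add: sum_distrib_right)
    finally
    show ?case using Suc rows by simp
  qed simp
  moreover have "column_mass Z pp k j \<le> (\<Sum>j<Z. column_mass Z pp k j)"
    using j column_mass_nonneg[OF nonneg] by (intro member_le_sum) auto
  ultimately show ?thesis by simp
qed

lemma square_le_of_quadratic_nonneg:
  fixes A B C :: real
  assumes nonneg: "\<And>t. 0 \<le> A * t\<^sup>2 + 2 * B * t + C" and A: "0 \<le> A"
  shows "B\<^sup>2 \<le> A * C"
proof (cases "A = 0")
  case True
  have "B = 0"
  proof (rule ccontr)
    assume B: "B \<noteq> 0"
    have "0 \<le> 2 * B * (- (C + 1) / (2 * B)) + C" using nonneg[of "- (C + 1) / (2 * B)"] True by simp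
    also have "\<dots> = -1" using B by (simp add: field_simps)
    finally show False by simp
  qed
  then show ?thesis using True by simp
next
  case False
  then have A_pos: "0 < A" using A by simp
  have "0 \<le> A * (- B / A)\<^sup>2 + 2 * B * (- B / A) + C" by (rule nonneg)
  also have "\<dots> = C - B\<^sup>2 / A" using A_pos by (simp add: power2_eq_square field_simps)
  finally show ?thesis using A_pos by (simp add: field_simps)
qed

lemma weighted_sum_square_le:
  fixes c a w b :: "nat \<Rightarrow> real"
  assumes c: "\<And>i. i < Z \<Longrightarrow> 0 \<le> c i" and w: "\<And>i. i < Z \<Longrightarrow> 0 \<le> w i"
    and b: "\<And>i. i < Z \<Longrightarrow> 0 \<le> b i" and ab: "\<And>i. i < Z \<Longrightarrow> (a i)\<^sup>2 \<le> w i * b i"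
  shows "(\<Sum>i<Z. c i * a i)\<^sup>2 \<le> (\<Sum>i<Z. c i * w i) * (\<Sum>i<Z. c i * b i)"
proof (rule square_le_of_quadratic_nonneg)
  have pointwise: "0 \<le> w i * t\<^sup>2 + 2 * a i * t + b i" if i: "i < Z" for i t
  proof -
    have "(2 * a i * t)\<^sup>2 = 4 * (a i)\<^sup>2 * t\<^sup>2" by (simp add: power_mult_distrib)
    also have "\<dots> \<le> 4 * (w i * b i) * t\<^sup>2" using ab[OF i] by (intro mult_right_mono mult_left_mono) auto
    also have "\<dots> \<le> (w i * t\<^sup>2 + b i)\<^sup>2"
      using zero_le_power2[of "w i * t\<^sup>2 - b i"] by (simp add: power2_eq_square algebra_simps)
    finally have "\<bar>2 * a i * t\<bar>\<^sup>2 \<le> (w i * t\<^sup>2 + b i)\<^sup>2" by simp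
    then have "\<bar>2 * a i * t\<bar> \<le> w i * t\<^sup>2 + b i" by (rule power2_le_imp_le) (use w[OF i] b[OF i] in simp)
    then show ?thesis by linarith
  qed
  fix t
  have "0 \<le> (\<Sum>i<Z. c i * (w i * t\<^sup>2 + 2 * a i * t + b i))"
    using c pointwise by (auto intro!: sum_nonneg)
  also have "\<dots> = (\<Sum>i<Z. c i * w i * t\<^sup>2 + 2 * t * (c i * a i) + c i * b i)"
    by (rule sum.cong[OF refl]) (simp add: algebra_simps)
  also have "\<dots> = (\<Sum>i<Z. c i * w i) * t\<^sup>2 + 2 * t * (\<Sum>i<Z. c i * a i) + (\<Sum>i<Z. c i * b i)"
    by (simp only: sum.distrib sum_distrib_left[symmetric] sum_distrib_right[symmetric])
  finally show "0 \<le> (\<Sum>i<Z. c i * w i) * t\<^sup>2 + 2 * (\<Sum>i<Z. c i * a i) * t + (\<Sum>i<Z. c i * b i)"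
    by (simp add: mult.commute mult.left_commute)
next
  show "0 \<le> (\<Sum>i<Z. c i * w i)" using c w by (auto intro!: sum_nonneg)
qed

lemma block_outer_carrier: "block_outer Z n y \<in> carrier_vec (Z * (n * n))"
  unfolding block_outer_def by simp

lemma block_lin_outer:
  assumes j: "j < Z" and y: "y \<in> carrier_vec (Z * n)"
  shows "block_quad n j v (block_outer Z n y) = (block_lin n j v y)\<^sup>2"
proof -
  have "block_outer Z n y $ (j * (n * n) + (d * n + c)) = y $ (j * n + c) * y $ (j * n + d)"
    if "d < n" "c < n" for d c
    using that mult_add_less_mult[OF j mult_add_less_mult[OF that]]
      mult_add_less_mult[OF that] by (simp add: block_outer_def)
  then have "block_quad n j v (block_outer Z n y) = (\<Sum>d<n. \<Sum>c<n. (v c * y $ (j * n + c)) * (v d * y $ (j * n + d)))"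
    unfolding block_quad_def by (intro sum.cong refl) (simp add: mult_ac)
  also have "\<dots> = (block_lin n j v y)\<^sup>2"
    unfolding block_lin_def power2_eq_square sum_product by (rule sum.swap)
  finally show ?thesis .
qed

lemma sum_lessThan_indicator_mult:
  fixes a n :: nat
  assumes "a < n"
  shows "(\<Sum>c<n. (if c = a then 1 else 0) * f c) = (f a :: real)"
proof -
  have "(\<Sum>c<n. (if c = a then 1 else 0) * f c) = (\<Sum>c<n. if c = a then f c else 0)"
    by (intro sum.cong) auto
  also have "\<dots> = f a" using assms by (subst sum.delta) auto
  finally show ?thesis .
qed

lemma block_lin_unit:
  "a < n \<Longrightarrow> block_lin n j (\<lambda>c. if c = a then 1 else 0) y = y $ (j * n + a)"
  unfolding block_lin_def by (rule sum_lessThan_indicator_mult)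

lemma block_quad_unit:
  assumes "a < n"
  shows "block_quad n j (\<lambda>c. if c = a then 1 else 0) Y = Y $ (j * (n * n) + (a * n + a))"
proof -
  have "block_quad n j u Y = (\<Sum>d<n. u d * (\<Sum>c<n. u c * Y $ (j * (n * n) + (d * n + c))))" for u
    unfolding block_quad_def by (simp add: sum_distrib_left mult_ac)
  then show ?thesis using assms by (simp add: sum_lessThan_indicator_mult)
qed

lemma sum_swap_2_3: "(\<Sum>a2<n. \<Sum>a1<n. \<Sum>i<Z. \<Sum>d<m. \<Sum>c<m. (F a2 a1 i d c :: real)) =
   (\<Sum>i<Z. \<Sum>d<m. \<Sum>c<m. \<Sum>a1<n. \<Sum>a2<n. F a2 a1 i d c)"
proof -
  have "(\<Sum>a2<n. \<Sum>a1<n. \<Sum>i<Z. \<Sum>d<m. \<Sum>c<m. F a2 a1 i d c) = (\<Sum>a2<n. \<Sum>i<Z. \<Sum>a1<n. \<Sum>d<m. \<Sum>c<m. F a2 a1 i d c)"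
    by (rule sum.cong[OF refl], rule sum.swap)
  also have "\<dots> = (\<Sum>i<Z. \<Sum>a2<n. \<Sum>a1<n. \<Sum>d<m. \<Sum>c<m. F a2 a1 i d c)" by (rule sum.swap)
  also have "\<dots> = (\<Sum>i<Z. \<Sum>a2<n. \<Sum>d<m. \<Sum>a1<n. \<Sum>c<m. F a2 a1 i d c)"
    by (rule sum.cong[OF refl], rule sum.cong[OF refl], rule sum.swap)
  also have "\<dots> = (\<Sum>i<Z. \<Sum>a2<n. \<Sum>d<m. \<Sum>c<m. \<Sum>a1<n. F a2 a1 i d c)"
    by (rule sum.cong[OF refl], rule sum.cong[OF refl], rule sum.cong[OF refl], rule sum.swap)
  also have "\<dots> = (\<Sum>i<Z. \<Sum>d<m. \<Sum>a2<n. \<Sum>c<m. \<Sum>a1<n. F a2 a1 i d c)"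
    by (rule sum.cong[OF refl], rule sum.swap)
  also have "\<dots> = (\<Sum>i<Z. \<Sum>d<m. \<Sum>c<m. \<Sum>a2<n. \<Sum>a1<n. F a2 a1 i d c)"
    by (rule sum.cong[OF refl], rule sum.cong[OF refl], rule sum.swap)
  also have "\<dots> = (\<Sum>i<Z. \<Sum>d<m. \<Sum>c<m. \<Sum>a1<n. \<Sum>a2<n. F a2 a1 i d c)"
    by (rule sum.cong[OF refl], rule sum.cong[OF refl], rule sum.cong[OF refl], rule sum.swap)
  finally show ?thesis .
qed

context
  fixes Z n :: nat and pp :: "nat \<Rightarrow> nat \<Rightarrow> real" and Hf :: "nat \<Rightarrow> real mat"
  assumes Hf: "\<And>i. i < Z \<Longrightarrow> Hf i \<in> carrier_mat n n"
begin

lemma Hf_dims: "i < Z \<Longrightarrow> dim_row (Hf i) = n" "i < Z \<Longrightarrow> dim_col (Hf i) = n"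
  using Hf by auto

lemma first_moment_mat_carrier: "first_moment_mat Z n pp Hf \<in> carrier_mat (Z * n) (Z * n)"
  and second_moment_mat_carrier: "second_moment_mat Z n pp Hf \<in> carrier_mat (Z * (n * n)) (Z * (n * n))"
  unfolding first_moment_mat_def second_moment_mat_def by (rule block_mat_carrier)+

lemma first_moment_block_lin:
  assumes j: "j < Z" and y: "y \<in> carrier_vec (Z * n)"
  shows "block_lin n j v (first_moment_mat Z n pp Hf *\<^sub>v y) =
    (\<Sum>i<Z. pp i j * block_lin n i (\<lambda>c. \<Sum>a<n. v a * Hf i $$ (a, c)) y)"
proof -
  have "block_lin n j v (first_moment_mat Z n pp Hf *\<^sub>v y) =
      (\<Sum>a<n. \<Sum>i<Z. \<Sum>c<n. v a * (pp i j * (Hf i $$ (a, c) * y $ (i * n + c))))"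
    unfolding block_lin_def first_moment_mat_def
    by (auto simp: block_mat_mult_vec_index[OF j _ y] sum_distrib_left Hf_dims intro!: sum.cong)
  also have "\<dots> = (\<Sum>i<Z. \<Sum>a<n. \<Sum>c<n. v a * (pp i j * (Hf i $$ (a, c) * y $ (i * n + c))))"
    by (rule sum.swap)
  also have "\<dots> = (\<Sum>i<Z. \<Sum>c<n. \<Sum>a<n. v a * (pp i j * (Hf i $$ (a, c) * y $ (i * n + c))))"
    by (rule sum.cong[OF refl], rule sum.swap)
  also have "\<dots> = (\<Sum>i<Z. pp i j * block_lin n i (\<lambda>c. \<Sum>a<n. v a * Hf i $$ (a, c)) y)"
    unfolding block_lin_def by (simp add: sum_distrib_left sum_distrib_right mult_ac)
  finally show ?thesis .
qed

lemma second_moment_mult_vec_index: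
  assumes j: "j < Z" and a1: "a1 < n" and a2: "a2 < n" and Y: "Y \<in> carrier_vec (Z * (n * n))"
  shows "(second_moment_mat Z n pp Hf *\<^sub>v Y) $ (j * (n * n) + (a2 * n + a1))
      = (\<Sum>i<Z. \<Sum>d<n. \<Sum>c<n. pp i j * (Hf i $$ (a2, d) * Hf i $$ (a1, c) * Y $ (i * (n * n) + (d * n + c))))"
  unfolding second_moment_mat_def block_mat_mult_vec_index[OF j mult_add_less_mult[OF a2 a1] Y]
    sum_lessThan_mult_eq
  using Hf a1 a2 mult_add_less_mult[OF a2 a1] mult_add_less_mult[of _ n _ n]
  by (intro sum.cong refl) (simp add: kron_self_index kron_dims Hf_dims)

lemma second_moment_block_quad:
  assumes j: "j < Z" and Y: "Y \<in> carrier_vec (Z * (n * n))"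
  shows "block_quad n j v (second_moment_mat Z n pp Hf *\<^sub>v Y) =
    (\<Sum>i<Z. pp i j * block_quad n i (\<lambda>c. \<Sum>a<n. v a * Hf i $$ (a, c)) Y)"
proof -
  let ?Y = "\<lambda>i d c. Y $ (i * (n * n) + (d * n + c))"
  have "block_quad n j v (second_moment_mat Z n pp Hf *\<^sub>v Y) =
      (\<Sum>a2<n. \<Sum>a1<n. \<Sum>i<Z. \<Sum>d<n. \<Sum>c<n. v a1 * v a2 * (pp i j * (Hf i $$ (a2, d) * Hf i $$ (a1, c) * ?Y i d c)))"
    unfolding block_quad_def
    by (intro sum.cong refl) (simp add: second_moment_mult_vec_index[OF j _ _ Y] sum_distrib_left)
  also have "\<dots> = (\<Sum>i<Z. \<Sum>d<n. \<Sum>c<n. \<Sum>a1<n. \<Sum>a2<n. v a1 * v a2 * (pp i j * (Hf i $$ (a2, d) * Hf i $$ (a1, c) * ?Y i d c)))"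
    by (rule sum_swap_2_3)
  also have "\<dots> = (\<Sum>i<Z. pp i j * block_quad n i (\<lambda>c. \<Sum>a<n. v a * Hf i $$ (a, c)) Y)"
    unfolding block_quad_def by (simp add: sum_distrib_left sum_distrib_right mult_ac)
  finally show ?thesis .
qed

text \<open>The invariant behind the domination: by the weighted Cauchy--Schwarz inequality along the chain,
  \<open>(v\<^sup>T y\<^sub>j)\<^sup>2\<close> stays below the column mass at \<open>j\<close> times \<open>v\<^sup>T Y\<^sub>j v\<close>.\<close>

lemma first_moment_square_le:
  assumes nonneg: "\<And>i j. i < Z \<Longrightarrow> j < Z \<Longrightarrow> 0 \<le> pp i j"
    and y: "y \<in> carrier_vec (Z * n)" and j: "j < Z"
  shows "0 \<le> block_quad n j v (second_moment_mat Z n pp Hf ^\<^sub>m k *\<^sub>v block_outer Z n y)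
    \<and> (block_lin n j v (first_moment_mat Z n pp Hf ^\<^sub>m k *\<^sub>v y))\<^sup>2
      \<le> column_mass Z pp k j * block_quad n j v (second_moment_mat Z n pp Hf ^\<^sub>m k *\<^sub>v block_outer Z n y)"
  using j
proof (induction k arbitrary: j v)
  case 0
  then show ?case using y block_outer_carrier[of Z n y]
    by (simp add: block_lin_outer first_moment_mat_def second_moment_mat_def block_mat_dims)
next
  case (Suc k)
  let ?u = "\<lambda>i c. \<Sum>a<n. v a * Hf i $$ (a, c)"
  note A1 = first_moment_mat_carrier and A2 = second_moment_mat_carrier
  note Y0 = block_outer_carrier[of Z n y]
  show ?case
    unfolding pow_mat_Suc_left_mult_vec[OF A1 y] pow_mat_Suc_left_mult_vec[OF A2 Y0] column_mass.simps
      first_moment_block_lin[OF Suc.prems mult_mat_vec_carrier[OF pow_carrier_mat[OF A1] y]]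
      second_moment_block_quad[OF Suc.prems mult_mat_vec_carrier[OF pow_carrier_mat[OF A2] Y0]]
    using Suc.IH nonneg Suc.prems
    by (auto intro!: sum_nonneg weighted_sum_square_le column_mass_nonneg[OF nonneg])
qed

lemma mat_powers_vanish_first_moment:
  assumes nonneg: "\<And>i j. i < Z \<Longrightarrow> j < Z \<Longrightarrow> 0 \<le> pp i j"
    and rows: "\<And>i. i < Z \<Longrightarrow> (\<Sum>j<Z. pp i j) = 1"
    and van: "mat_powers_vanish (second_moment_mat Z n pp Hf) (Z * (n * n))"
  shows "mat_powers_vanish (first_moment_mat Z n pp Hf) (Z * n)"
proof (rule mat_powers_vanishI[OF first_moment_mat_carrier])
  fix y :: "real vec" and r assume y: "y \<in> carrier_vec (Z * n)" and r: "r < Z * n"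
  define j a where "j = r div n" and "a = r mod n"
  have j: "j < Z" and a: "a < n" and r_eq: "r = j * n + a"
    using index_decomp[OF r] unfolding j_def a_def by auto
  define diag where "diag = j * (n * n) + (a * n + a)"
  have diag: "diag < Z * (n * n)" unfolding diag_def by (intro mult_add_less_mult j a)
  let ?x = "\<lambda>k. (first_moment_mat Z n pp Hf ^\<^sub>m k *\<^sub>v y) $ r"
  let ?X = "\<lambda>k. (second_moment_mat Z n pp Hf ^\<^sub>m k *\<^sub>v block_outer Z n y) $ diag"
  have bound: "(?x k)\<^sup>2 \<le> Z * \<bar>?X k\<bar>" for k
  proof -
    from first_moment_square_le[OF nonneg y j, where v = "\<lambda>c. if c = a then 1 else 0" and k = k]
    have "(?x k)\<^sup>2 \<le> column_mass Z pp k j * ?X k" and "0 \<le> ?X k"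
      unfolding block_lin_unit[OF a] block_quad_unit[OF a] r_eq diag_def by auto
    moreover have "column_mass Z pp k j \<le> Z" using nonneg rows j by (rule column_mass_le)
    ultimately show ?thesis by (smt (verit) mult_right_mono)
  qed
  have "?X \<longlonglongrightarrow> 0"
    by (rule mat_powers_vanish_mult_vec[OF second_moment_mat_carrier van block_outer_carrier diag])
  then have "(\<lambda>k. Z * \<bar>?X k\<bar>) \<longlonglongrightarrow> 0" by (simp add: tendsto_mult_right_zero tendsto_rabs_zero)
  then have "(\<lambda>k. (?x k)\<^sup>2) \<longlonglongrightarrow> 0" by (rule LIMSEQ_zero_if_abs_le[rotated]) (use bound in auto)
  then have "(\<lambda>k. sqrt ((?x k)\<^sup>2)) \<longlonglongrightarrow> sqrt 0" by (rule tendsto_real_sqrt)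
  then show "?x \<longlonglongrightarrow> 0" by (simp add: tendsto_rabs_zero_iff)
qed

end

definition depends_upto :: "nat \<Rightarrow> ((nat \<Rightarrow> nat) \<Rightarrow> 'b) \<Rightarrow> bool" where
  "depends_upto K f \<longleftrightarrow> (\<forall>\<omega> \<omega>'. (\<forall>t\<le>K. \<omega> t = \<omega>' t) \<longrightarrow> f \<omega> = f \<omega>')"

lemma depends_upto_const: "depends_upto K (\<lambda>_. c)" unfolding depends_upto_def by simp

lemma paths_0: "paths N 0 = (\<lambda>(y, g). g(0 := y)) ` ({0..<N} \<times> {\<lambda>x. undefined})"
proof -
  have "{0..(0::nat)} = insert 0 {}" by auto
  then show ?thesis unfolding paths_def by (simp add: PiE_insert_eq)
qed

lemma paths_Suc: "paths N (Suc K) = (\<lambda>(y, g). g(Suc K := y)) ` ({0..<N} \<times> paths N K)"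
  unfolding paths_def by (simp add: atLeast0_atMost_Suc PiE_insert_eq)

lemma inj_on_paths_Suc: "inj_on (\<lambda>(y, g). g(Suc K := y)) ({0..<N} \<times> paths N K)"
  unfolding paths_def using inj_combinator[of "Suc K" "{0..K}" "\<lambda>_. {0..<N}"] by simp

lemma paths_mem_less: "\<omega> \<in> paths N K \<Longrightarrow> t \<le> K \<Longrightarrow> \<omega> t < N"
  unfolding paths_def by (auto simp: PiE_iff)

lemma pexp_cong: "(\<And>\<omega>. \<omega> \<in> paths (nst S) K \<Longrightarrow> f \<omega> = g \<omega>) \<Longrightarrow> pexp S K f = pexp S K g"
  unfolding pexp_def by (intro sum.cong refl) auto

lemma pexp_sum: "pexp S K (\<lambda>\<omega>. \<Sum>i\<in>I. f i \<omega>) = (\<Sum>i\<in>I. pexp S K (f i))"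
  unfolding pexp_def by (simp add: sum_distrib_left sum.swap[of _ I])

lemma pexp_mult_left: "pexp S K (\<lambda>\<omega>. c * f \<omega>) = c * pexp S K f"
  unfolding pexp_def by (simp add: sum_distrib_left mult_ac)

lemma pexp_mult_right: "pexp S K (\<lambda>\<omega>. f \<omega> * c) = pexp S K f * c"
  using pexp_mult_left[of S K c f] by (simp add: mult.commute)

lemma pexp_add: "pexp S K (\<lambda>\<omega>. f \<omega> + g \<omega>) = pexp S K f + pexp S K g"
  unfolding pexp_def by (simp add: distrib_left sum.distrib)

lemma sum_times_singleton: "sum h (A \<times> {c}) = (\<Sum>s\<in>A. h (s, c))"
proof -
  have "A \<times> {c} = (\<lambda>s. (s, c)) ` A" by auto
  moreover have "inj_on (\<lambda>s. (s, c)) A" by (auto intro: inj_onI)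
  ultimately show ?thesis by (simp add: sum.reindex)
qed

lemma pexp_0: "pexp S 0 f = (\<Sum>s<nst S. mu0 S s * f ((\<lambda>x. undefined)(0 := s)))"
proof -
  let ?N = "nst S"
  have inj: "inj_on (\<lambda>(y, g). g(0 := y)) ({0..<?N} \<times> {\<lambda>x. undefined})"
    by (auto intro!: inj_onI dest: fun_cong[where x = 0])
  have "pexp S 0 f = sum (\<lambda>\<omega>. path_prob S 0 \<omega> * f \<omega>) ((\<lambda>(y, g). g(0 := y)) ` ({0..<?N} \<times> {\<lambda>x. undefined}))"
    unfolding pexp_def paths_0 ..
  also have "\<dots> = (\<Sum>s<?N. mu0 S s * f ((\<lambda>x. undefined)(0 := s)))"
    by (subst sum.reindex[OF inj]) (simp add: sum_times_singleton path_prob_def atLeast0LessThan)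
  finally show ?thesis .
qed

lemma path_prob_fun_upd:
  assumes "\<omega> \<in> paths N K"
  shows "path_prob S (Suc K) (\<omega>(Suc K := y)) = path_prob S K \<omega> * P S (\<omega> K) y"
proof -
  have "(\<Prod>j<K. P S ((\<omega>(Suc K := y)) j) ((\<omega>(Suc K := y)) (Suc j))) = (\<Prod>j<K. P S (\<omega> j) (\<omega> (Suc j)))"
    by (intro prod.cong refl) auto
  then show ?thesis unfolding path_prob_def by (simp add: mult_ac)
qed

lemma pexp_Suc_markov:
  assumes f: "depends_upto K f"
  shows "pexp S (Suc K) (\<lambda>\<omega>. f \<omega> * g (\<omega> K) (\<omega> (Suc K))) =
         pexp S K (\<lambda>\<omega>. f \<omega> * (\<Sum>s<nst S. P S (\<omega> K) s * g (\<omega> K) s))"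
proof -
  let ?N = "nst S"
  let ?F = "\<lambda>\<omega>. path_prob S (Suc K) \<omega> * (f \<omega> * g (\<omega> K) (\<omega> (Suc K)))"
  have "pexp S (Suc K) (\<lambda>\<omega>. f \<omega> * g (\<omega> K) (\<omega> (Suc K))) = sum ?F (paths ?N (Suc K))"
    unfolding pexp_def ..
  also have "\<dots> = sum (?F \<circ> (\<lambda>(y, g). g(Suc K := y))) ({0..<?N} \<times> paths ?N K)"
    unfolding paths_Suc by (rule sum.reindex[OF inj_on_paths_Suc])
  also have "\<dots> = (\<Sum>(y,\<omega>)\<in>{0..<?N} \<times> paths ?N K. ?F (\<omega>(Suc K := y)))"
    by (rule sum.cong) (auto split: prod.splits)
  also have "\<dots> = (\<Sum>y\<in>{0..<?N}. \<Sum>\<omega>\<in>paths ?N K. ?F (\<omega>(Suc K := y)))"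
    by (rule sum.cartesian_product[symmetric])
  also have "\<dots> = (\<Sum>\<omega>\<in>paths ?N K. \<Sum>y\<in>{0..<?N}. ?F (\<omega>(Suc K := y)))" by (rule sum.swap)
  also have "\<dots> = (\<Sum>\<omega>\<in>paths ?N K. path_prob S K \<omega> * (f \<omega> * (\<Sum>s<?N. P S (\<omega> K) s * g (\<omega> K) s)))"
  proof (intro sum.cong refl)
    fix \<omega> assume w: "\<omega> \<in> paths ?N K"
    have fe: "f (\<omega>(Suc K := y)) = f \<omega>" for y using f unfolding depends_upto_def by auto
    have "(\<Sum>y\<in>{0..<?N}. ?F (\<omega>(Suc K := y))) = (\<Sum>y<?N. path_prob S K \<omega> * (f \<omega> * (P S (\<omega> K) y * g (\<omega> K) y)))"
      by (intro sum.cong) (auto simp: path_prob_fun_upd[OF w] fe mult_ac)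
    also have "\<dots> = path_prob S K \<omega> * (f \<omega> * (\<Sum>s<?N. P S (\<omega> K) s * g (\<omega> K) s))"
      by (simp add: sum_distrib_left)
    finally show "(\<Sum>y\<in>{0..<?N}. ?F (\<omega>(Suc K := y))) = path_prob S K \<omega> * (f \<omega> * (\<Sum>s<?N. P S (\<omega> K) s * g (\<omega> K) s))" .
  qed
  also have "\<dots> = pexp S K (\<lambda>\<omega>. f \<omega> * (\<Sum>s<nst S. P S (\<omega> K) s * g (\<omega> K) s))"
    unfolding pexp_def ..
  finally show ?thesis .
qed

lemma pexp_Suc_marginal:
  assumes st: "stochastic_matrix (nst S) (P S)" and f: "depends_upto K f"
  shows "pexp S (Suc K) f = pexp S K f"
proof -
  have "pexp S (Suc K) f = pexp S (Suc K) (\<lambda>\<omega>. f \<omega> * (\<lambda>x y. 1) (\<omega> K) (\<omega> (Suc K)))" by simp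
  also have "\<dots> = pexp S K (\<lambda>\<omega>. f \<omega> * (\<Sum>s<nst S. P S (\<omega> K) s * 1))" by (rule pexp_Suc_markov[OF f])
  also have "\<dots> = pexp S K f"
  proof (rule pexp_cong)
    fix \<omega> assume "\<omega> \<in> paths (nst S) K"
    then have "\<omega> K < nst S" by (rule paths_mem_less) simp
    then show "f \<omega> * (\<Sum>s<nst S. P S (\<omega> K) s * 1) = f \<omega>" using st unfolding stochastic_matrix_def by simp
  qed
  finally show ?thesis .
qed

lemma pexp_state_indicator:
  assumes st: "stochastic_matrix (nst S) (P S)" and s: "s < nst S"
  shows "pexp S k (\<lambda>\<omega>. if \<omega> k = s then 1 else 0) = (\<Sum>l<nst S. mu0 S l * mstep (nst S) (P S) k l s)"
  using s
proof (induction k arbitrary: s)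
  case 0
  show ?case unfolding pexp_0 by (intro sum.cong refl) auto
next
  case (Suc k)
  let ?N = "nst S"
  have "pexp S (Suc k) (\<lambda>\<omega>. if \<omega> (Suc k) = s then 1 else 0) =
        pexp S (Suc k) (\<lambda>\<omega>. (\<lambda>_. 1) \<omega> * (\<lambda>x y. if y = s then 1 else 0) (\<omega> k) (\<omega> (Suc k)))" by simp
  also have "\<dots> = pexp S k (\<lambda>\<omega>. 1 * (\<Sum>s'<?N. P S (\<omega> k) s' * (if s' = s then 1 else 0)))"
    by (rule pexp_Suc_markov[OF depends_upto_const])
  also have "\<dots> = pexp S k (\<lambda>\<omega>. \<Sum>l<?N. P S l s * (if \<omega> k = l then 1 else 0))"
  proof (rule pexp_cong)
    fix \<omega> assume "\<omega> \<in> paths ?N k"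
    then have wk: "\<omega> k < ?N" by (rule paths_mem_less) simp
    have "(\<Sum>s'<?N. P S (\<omega> k) s' * (if s' = s then 1 else 0)) = P S (\<omega> k) s"
      using Suc.prems by (simp add: if_distrib cong: if_cong)
    moreover have "(\<Sum>l<?N. P S l s * (if \<omega> k = l then 1 else 0)) = P S (\<omega> k) s"
      using wk by (simp add: if_distrib cong: if_cong)
    ultimately show "1 * (\<Sum>s'<?N. P S (\<omega> k) s' * (if s' = s then 1 else 0)) = (\<Sum>l<?N. P S l s * (if \<omega> k = l then 1 else 0))"
      by simp
  qed
  also have "\<dots> = (\<Sum>l<?N. P S l s * pexp S k (\<lambda>\<omega>. if \<omega> k = l then 1 else 0))"
    by (simp add: pexp_sum pexp_mult_left)
  also have "\<dots> = (\<Sum>l<?N. P S l s * (\<Sum>l0<?N. mu0 S l0 * mstep ?N (P S) k l0 l))"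
    by (intro sum.cong refl) (simp add: Suc.IH)
  also have "\<dots> = (\<Sum>l<?N. \<Sum>l0<?N. mu0 S l0 * (mstep ?N (P S) k l0 l * P S l s))"
    by (simp add: sum_distrib_left mult_ac)
  also have "\<dots> = (\<Sum>l0<?N. \<Sum>l<?N. mu0 S l0 * (mstep ?N (P S) k l0 l * P S l s))" by (rule sum.swap)
  also have "\<dots> = (\<Sum>l0<?N. mu0 S l0 * mstep ?N (P S) (Suc k) l0 s)"
    by (simp add: sum_distrib_left)
  finally show ?case .
qed

lemma zidx_eq_iff:
  assumes N: "0 < nst S" and x: "x < nst S" and s: "s < nst S"
  shows "(zidx S x s = i) \<longleftrightarrow> (x = zfst S i \<and> s = zsnd S i)"
proof
  assume "zidx S x s = i"
  then show "x = zfst S i \<and> s = zsnd S i" unfolding zidx_def zfst_def zsnd_def using s by auto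
next
  assume "x = zfst S i \<and> s = zsnd S i"
  then show "zidx S x s = i" unfolding zidx_def zfst_def zsnd_def by simp
qed

lemma zfst_less: "i < nz S \<Longrightarrow> zfst S i < nst S"
  unfolding nz_def zfst_def by (simp add: less_mult_imp_div_less)

lemma zsnd_less: "0 < nst S \<Longrightarrow> zsnd S i < nst S"
  unfolding zsnd_def by simp

lemma zfst_zidx: "y < nst S \<Longrightarrow> zfst S (zidx S x y) = x"
  unfolding zfst_def zidx_def by simp

lemma zsnd_zidx: "y < nst S \<Longrightarrow> zsnd S (zidx S x y) = y"
  unfolding zsnd_def zidx_def by simp

lemma zidx_less: "x < nst S \<Longrightarrow> y < nst S \<Longrightarrow> zidx S x y < nz S"
  unfolding zidx_def nz_def using mult_add_less_mult by blast

lemma zP_zidx: "y < nst S \<Longrightarrow> zP S (zidx S x y) j = (if y = zfst S j then P S (zfst S j) (zsnd S j) else 0)"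
  unfolding zP_def by (simp add: zsnd_zidx)

lemma zP_nonneg: assumes st: "stochastic_matrix (nst S) (P S)" and N: "0 < nst S" and j: "j < nz S"
  shows "0 \<le> zP S i j"
  using st zfst_less[OF j] zsnd_less[OF N, of j] unfolding zP_def stochastic_matrix_def by auto

lemma zP_row_sum: assumes st: "stochastic_matrix (nst S) (P S)" and N: "0 < nst S"
  shows "(\<Sum>j<nz S. zP S i j) = 1"
proof -
  let ?N = "nst S"
  have "(\<Sum>j<nz S. zP S i j) = (\<Sum>s<?N. \<Sum>s'<?N. zP S i (s * ?N + s'))"
    unfolding nz_def by (rule sum_lessThan_mult_eq)
  also have "\<dots> = (\<Sum>s<?N. \<Sum>s'<?N. if s = zsnd S i then P S s s' else 0)"
    by (intro sum.cong refl) (simp add: zP_def zfst_def zsnd_def)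
  also have "\<dots> = (\<Sum>s'<?N. P S (zsnd S i) s')" using zsnd_less[OF N, of i]
    by (simp add: sum.swap[of _ "{..<?N}" "{..<?N}"] if_distrib cong: if_cong)
  also have "\<dots> = 1" using st zsnd_less[OF N, of i] unfolding stochastic_matrix_def by simp
  finally show ?thesis .
qed

lemma sum_zind:
  assumes x: "\<omega> k < nst S" and y: "\<omega> (Suc k) < nst S"
  shows "(\<Sum>i<nz S. zind S k i \<omega> * F i) = F (zidx S (\<omega> k) (\<omega> (Suc k)))"
proof -
  have "(\<Sum>i<nz S. zind S k i \<omega> * F i) = (\<Sum>i<nz S. if i = zidx S (\<omega> k) (\<omega> (Suc k)) then F i else 0)"
    unfolding zind_def by (intro sum.cong refl) auto
  also have "\<dots> = F (zidx S (\<omega> k) (\<omega> (Suc k)))" using zidx_less[OF x y] by simp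
  finally show ?thesis .
qed

lemma sum_P_zidx_indicator:
  assumes N: "0 < nst S" and x: "x < nst S"
  shows "(\<Sum>s<nst S. P S x s * (if zidx S x s = j then 1 else 0)) = (if x = zfst S j then P S (zfst S j) (zsnd S j) else 0)"
proof -
  have "(\<Sum>s<nst S. P S x s * (if zidx S x s = j then 1 else 0)) =
        (\<Sum>s<nst S. if s = zsnd S j then (if x = zfst S j then P S x s else 0) else 0)"
    by (intro sum.cong refl) (auto simp: zidx_eq_iff[OF N x])
  also have "\<dots> = (if x = zfst S j then P S x (zsnd S j) else 0)"
    using zsnd_less[OF N, of j] by simp
  finally show ?thesis by simp
qed

lemma pexp_next_pair:
  assumes N: "0 < nst S" and j: "j < nz S" and fd: "depends_upto (Suc k) f"
  shows "pexp S (Suc (Suc k)) (\<lambda>\<omega>. f \<omega> * zind S (Suc k) j \<omega>) =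
         pexp S (Suc k) (\<lambda>\<omega>. \<Sum>i<nz S. zP S i j * (zind S k i \<omega> * f \<omega>))"
proof -
  have "pexp S (Suc (Suc k)) (\<lambda>\<omega>. f \<omega> * zind S (Suc k) j \<omega>) =
        pexp S (Suc (Suc k)) (\<lambda>\<omega>. f \<omega> * (\<lambda>x y. if zidx S x y = j then 1 else 0) (\<omega> (Suc k)) (\<omega> (Suc (Suc k))))"
    unfolding zind_def by simp
  also have "\<dots> = pexp S (Suc k) (\<lambda>\<omega>. f \<omega> * (\<Sum>s<nst S. P S (\<omega> (Suc k)) s * (if zidx S (\<omega> (Suc k)) s = j then 1 else 0)))"
    by (rule pexp_Suc_markov[OF fd])
  also have "\<dots> = pexp S (Suc k) (\<lambda>\<omega>. \<Sum>i<nz S. zP S i j * (zind S k i \<omega> * f \<omega>))"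
  proof (rule pexp_cong)
    fix \<omega> assume w: "\<omega> \<in> paths (nst S) (Suc k)"
    have x: "\<omega> k < nst S" and y: "\<omega> (Suc k) < nst S" using paths_mem_less[OF w] by auto
    have "(\<Sum>i<nz S. zP S i j * (zind S k i \<omega> * f \<omega>)) = (\<Sum>i<nz S. zind S k i \<omega> * (zP S i j * f \<omega>))"
      by (simp add: mult_ac)
    also have "\<dots> = zP S (zidx S (\<omega> k) (\<omega> (Suc k))) j * f \<omega>" by (rule sum_zind[OF x y])
    also have "\<dots> = f \<omega> * (if \<omega> (Suc k) = zfst S j then P S (zfst S j) (zsnd S j) else 0)"
      using zP_zidx[OF y] by simp
    finally show "f \<omega> * (\<Sum>s<nst S. P S (\<omega> (Suc k)) s * (if zidx S (\<omega> (Suc k)) s = j then 1 else 0)) =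
        (\<Sum>i<nz S. zP S i j * (zind S k i \<omega> * f \<omega>))"
      unfolding sum_P_zidx_indicator[OF N y] by simp
  qed
  finally show ?thesis .
qed

lemma pk_eq:
  assumes N: "0 < nst S" and i: "i < nz S"
  shows "pk S k i = pexp S k (\<lambda>\<omega>. if \<omega> k = zfst S i then 1 else 0) * P S (zfst S i) (zsnd S i)"
proof -
  let ?N = "nst S"
  have "pk S k i = pexp S (Suc k) (\<lambda>\<omega>. (\<lambda>_. 1) \<omega> * (\<lambda>x y. if zidx S x y = i then 1 else 0) (\<omega> k) (\<omega> (Suc k)))"
    unfolding pk_def zind_def by simp
  also have "\<dots> = pexp S k (\<lambda>\<omega>. 1 * (\<Sum>s<?N. P S (\<omega> k) s * (if zidx S (\<omega> k) s = i then 1 else 0)))"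
    by (rule pexp_Suc_markov[OF depends_upto_const])
  also have "\<dots> = pexp S k (\<lambda>\<omega>. P S (zfst S i) (zsnd S i) * (if \<omega> k = zfst S i then 1 else 0))"
  proof (rule pexp_cong)
    fix \<omega> assume "\<omega> \<in> paths ?N k"
    then have wk: "\<omega> k < ?N" by (rule paths_mem_less) simp
    have "(\<Sum>s<?N. P S (\<omega> k) s * (if zidx S (\<omega> k) s = i then 1 else 0)) =
          (\<Sum>s<?N. if s = zsnd S i then (if \<omega> k = zfst S i then P S (\<omega> k) s else 0) else 0)"
      by (intro sum.cong refl) (auto simp: zidx_eq_iff[OF N wk])
    also have "\<dots> = (if \<omega> k = zfst S i then P S (\<omega> k) (zsnd S i) else 0)"
      using zsnd_less[OF N, of i] by simp
    finally show "1 * (\<Sum>s<?N. P S (\<omega> k) s * (if zidx S (\<omega> k) s = i then 1 else 0)) =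
          P S (zfst S i) (zsnd S i) * (if \<omega> k = zfst S i then 1 else 0)" by simp
  qed
  also have "\<dots> = P S (zfst S i) (zsnd S i) * pexp S k (\<lambda>\<omega>. if \<omega> k = zfst S i then 1 else 0)"
    by (rule pexp_mult_left)
  finally show ?thesis by simp
qed

lemma pk_tendsto:
  assumes N: "0 < nst S" and st: "stochastic_matrix (nst S) (P S)" and irr: "irreducible_chain (nst S) (P S)"
    and ap: "aperiodic_chain (nst S) (P S)" and i: "i < nz S"
  shows "(\<lambda>k. pk S k i) \<longlonglongrightarrow> pinf S i"
proof -
  let ?N = "nst S"
  let ?s = "zfst S i"
  have s: "?s < ?N" by (rule zfst_less[OF i])
  have "\<forall>l. \<exists>L. l < ?N \<longrightarrow> (\<lambda>k. mstep ?N (P S) k l ?s) \<longlonglongrightarrow> L"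
    using mstep_convergent[OF N st irr ap _ s] unfolding convergent_def by blast
  then obtain L where L: "\<And>l. l < ?N \<Longrightarrow> (\<lambda>k. mstep ?N (P S) k l ?s) \<longlonglongrightarrow> L l" by metis
  have "(\<lambda>k. (\<Sum>l<?N. mu0 S l * mstep ?N (P S) k l ?s) * P S ?s (zsnd S i)) \<longlonglongrightarrow>
        (\<Sum>l<?N. mu0 S l * L l) * P S ?s (zsnd S i)"
    using L by (intro tendsto_mult_right tendsto_sum tendsto_mult_left) auto
  moreover have "pk S k i = (\<Sum>l<?N. mu0 S l * mstep ?N (P S) k l ?s) * P S ?s (zsnd S i)" for k
    unfolding pk_eq[OF N i] pexp_state_indicator[OF st s] ..
  ultimately have T: "(\<lambda>k. pk S k i) \<longlonglongrightarrow> (\<Sum>l<?N. mu0 S l * L l) * P S ?s (zsnd S i)" by simp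
  then have "pinf S i = (\<Sum>l<?N. mu0 S l * L l) * P S ?s (zsnd S i)" unfolding pinf_def by (rule limI)
  then show ?thesis using T by simp
qed

section \<open>The error recursion of decentralized TD(0)\<close>

lemma Amat_dims[simp]: "dim_row (Amat S i) = p S" "dim_col (Amat S i) = p S" unfolding Amat_def by simp_all

lemma Thstar_dims[simp]: "dim_row (Thstar S) = p S" "dim_col (Thstar S) = M S" unfolding Thstar_def by simp_all

lemma Bmat_dims[simp]: "dim_row (Bmat S i) = p S" "dim_col (Bmat S i) = M S" unfolding Bmat_def by simp_all

lemma Amat_carrier: "Amat S i \<in> carrier_mat (p S) (p S)" unfolding Amat_def by simp

lemma Amat_index: "a < p S \<Longrightarrow> b < p S \<Longrightarrow>
  Amat S i $$ (a,b) = phi S (zfst S i) a * (gam S * phi S (zsnd S i) b - phi S (zfst S i) b)"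
  unfolding Amat_def by simp

lemma Wmat_carrier: "Wmat S \<in> carrier_mat (M S) (M S)" unfolding Wmat_def by simp

lemma Hmat_carrier: "Hmat S i \<in> carrier_mat (nxi S) (nxi S)"
  unfolding Hmat_def nxi_def using kron_carrier[of "1\<^sub>m (M S)" "Amat S i"] kron_carrier[of "Wmat S" "1\<^sub>m (p S)"]
    Amat_carrier[of S i] Wmat_carrier[of S] by auto

lemma Hmat_dims[simp]: "dim_row (Hmat S i) = nxi S" "dim_col (Hmat S i) = nxi S"
  using Hmat_carrier[of S i] by auto

lemma Hmat_index:
  assumes r: "r < nxi S" and c: "c < nxi S"
  shows "Hmat S i $$ (r,c) = alpha S * (if r div p S = c div p S then Amat S i $$ (r mod p S, c mod p S) else 0)
     + (if r mod p S = c mod p S then W S (r div p S) (c div p S) else 0)"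
proof -
  have r': "r < M S * p S" and c': "c < M S * p S" using r c unfolding nxi_def by auto
  have pp: "0 < p S" using r' by (cases "p S") auto
  have k1: "kron (1\<^sub>m (M S)) (Amat S i) $$ (r,c) = (if r div p S = c div p S then Amat S i $$ (r mod p S, c mod p S) else 0)"
    using r' c' Amat_carrier[of S i] less_mult_imp_div_less[OF r'] less_mult_imp_div_less[OF c'] by (simp add: kron_index)
  have k2: "kron (Wmat S) (1\<^sub>m (p S)) $$ (r,c) = (if r mod p S = c mod p S then W S (r div p S) (c div p S) else 0)"
    using r' c' Wmat_carrier[of S] less_mult_imp_div_less[OF r'] less_mult_imp_div_less[OF c'] pp by (simp add: kron_index Wmat_def)
  have d1: "kron (1\<^sub>m (M S)) (Amat S i) \<in> carrier_mat (nxi S) (nxi S)"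
    using kron_carrier[of "1\<^sub>m (M S)" "Amat S i"] Amat_carrier[of S i] unfolding nxi_def by simp
  have d2: "kron (Wmat S) (1\<^sub>m (p S)) \<in> carrier_mat (nxi S) (nxi S)"
    using kron_carrier[of "Wmat S" "1\<^sub>m (p S)"] Wmat_carrier[of S] unfolding nxi_def by simp
  show ?thesis unfolding Hmat_def using d1 d2 r c k1 k2 by simp
qed

lemma Gvec_carrier: "Gvec S i \<in> carrier_vec (nxi S)"
  unfolding Gvec_def vecm_def nxi_def by (simp add: mult.commute)

lemma Gvec_dim[simp]: "dim_vec (Gvec S i) = nxi S"
  using Gvec_carrier[of S i] by auto

lemma Gvec_index:
  assumes r: "r < nxi S"
  shows "Gvec S i $ r = alpha S * (R S (r div p S) (zfst S i) (zsnd S i) * phi S (zfst S i) (r mod p S)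
     + (\<Sum>l<p S. Amat S i $$ (r mod p S, l) * thstar S $ l))"
proof -
  have r': "r < p S * M S" using r unfolding nxi_def by (simp add: mult.commute)
  have pp: "0 < p S" using r' by (cases "p S") auto
  have m: "r div p S < M S" using r unfolding nxi_def by (simp add: less_mult_imp_div_less)
  have a: "r mod p S < p S" using pp by simp
  have X: "Bmat S i + Amat S i * Thstar S \<in> carrier_mat (p S) (M S)"
    unfolding Bmat_def Thstar_def using Amat_carrier[of S i] by auto
  have "(Amat S i * Thstar S) $$ (r mod p S, r div p S) = (\<Sum>l<p S. Amat S i $$ (r mod p S, l) * thstar S $ l)"
    using Amat_carrier[of S i] a m unfolding Thstar_def
    by (simp add: scalar_prod_def atLeast0LessThan)
  then show ?thesis
    unfolding Gvec_def vecm_def using X r' a m by (simp add: Bmat_def bvec_def mult.commute)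
qed

lemma xi_carrier: "xi S k \<omega> \<in> carrier_vec (nxi S)" unfolding xi_def by simp

lemma xi_index: "r < nxi S \<Longrightarrow> xi S k \<omega> $ r = theta S k \<omega> (r div p S) (r mod p S) - thstar S $ (r mod p S)"
  unfolding xi_def by simp

lemma theta_depends_upto: "(\<forall>t\<le>k. \<omega> t = \<omega>' t) \<Longrightarrow> theta S k \<omega> m j = theta S k \<omega>' m j"
proof (induction k arbitrary: m j)
  case 0 then show ?case by simp
next
  case (Suc k)
  have IH: "theta S k \<omega> m j = theta S k \<omega>' m j" for m j using Suc by auto
  have e1: "\<omega> k = \<omega>' k" "\<omega> (Suc k) = \<omega>' (Suc k)" using Suc.prems by auto
  show ?case unfolding theta.simps IH e1 ..
qed

lemma xi_depends_upto: "depends_upto k (xi S k)"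
  unfolding depends_upto_def
proof (intro allI impI)
  fix \<omega> \<omega>' :: "nat \<Rightarrow> nat" assume h: "\<forall>t\<le>k. \<omega> t = \<omega>' t"
  show "xi S k \<omega> = xi S k \<omega>'" unfolding xi_def theta_depends_upto[OF h] ..
qed

lemma xi_fun_depends_upto: "depends_upto k (\<lambda>\<omega>. f (xi S k \<omega>))"
  unfolding depends_upto_def
proof (intro allI impI)
  fix \<omega> \<omega>' :: "nat \<Rightarrow> nat" assume h: "\<forall>t\<le>k. \<omega> t = \<omega>' t"
  have "xi S k \<omega> = xi S k \<omega>'" using xi_depends_upto[of k S] h unfolding depends_upto_def by blast
  then show "f (xi S k \<omega>) = f (xi S k \<omega>')" by simp
qed

lemma sum_kron_row_mult:
  fixes X :: "nat \<Rightarrow> nat \<Rightarrow> real" and A B :: "nat \<Rightarrow> real"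
  assumes m: "m < MM" and j: "j < pp"
  shows "(\<Sum>m'<MM. \<Sum>l<pp. (a * (if m = m' then A l else 0) + (if j = l then B m' else 0)) * X m' l) =
         a * (\<Sum>l<pp. A l * X m l) + (\<Sum>m'<MM. B m' * X m' j)"
proof -
  have "(\<Sum>m'<MM. \<Sum>l<pp. (a * (if m = m' then A l else 0) + (if j = l then B m' else 0)) * X m' l) =
        (\<Sum>m'<MM. (if m = m' then a * (\<Sum>l<pp. A l * X m l) else 0) + B m' * X m' j)"
  proof (intro sum.cong refl)
    fix m' assume "m' \<in> {..<MM}"
    have "(\<Sum>l<pp. (a * (if m = m' then A l else 0) + (if j = l then B m' else 0)) * X m' l) =
          (\<Sum>l<pp. a * (if m = m' then A l else 0) * X m' l) + (\<Sum>l<pp. (if j = l then B m' else 0) * X m' l)"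
      by (simp only: distrib_right sum.distrib)
    also have "(\<Sum>l<pp. a * (if m = m' then A l else 0) * X m' l) = (if m = m' then a * (\<Sum>l<pp. A l * X m l) else 0)"
      by (cases "m = m'") (simp_all add: sum_distrib_left mult.assoc)
    also have "(\<Sum>l<pp. (if j = l then B m' else 0) * X m' l) = (\<Sum>l<pp. if l = j then B m' * X m' l else 0)"
      by (intro sum.cong refl) auto
    also have "\<dots> = B m' * X m' j" using j by (subst sum.delta) auto
    finally show "(\<Sum>l<pp. (a * (if m = m' then A l else 0) + (if j = l then B m' else 0)) * X m' l) =
        (if m = m' then a * (\<Sum>l<pp. A l * X m l) else 0) + B m' * X m' j" .
  qed
  also have "\<dots> = a * (\<Sum>l<pp. A l * X m l) + (\<Sum>m'<MM. B m' * X m' j)"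
    using m by (simp add: sum.distrib)
  finally show ?thesis .
qed

lemma Hmat_row_mult:
  assumes r: "r < nxi S"
  shows "(\<Sum>c<nxi S. Hmat S i $$ (r,c) * x $ c) =
    alpha S * (\<Sum>l<p S. Amat S i $$ (r mod p S, l) * x $ (r div p S * p S + l))
    + (\<Sum>m'<M S. W S (r div p S) m' * x $ (m' * p S + r mod p S))"
proof -
  have p: "0 < p S" using r unfolding nxi_def by (cases "p S") auto
  have m: "r div p S < M S" using r unfolding nxi_def by (simp add: less_mult_imp_div_less)
  have "(\<Sum>c<nxi S. Hmat S i $$ (r,c) * x $ c) = (\<Sum>m'<M S. \<Sum>l<p S.
      (alpha S * (if r div p S = m' then Amat S i $$ (r mod p S, l) else 0)
       + (if r mod p S = l then W S (r div p S) m' else 0)) * x $ (m' * p S + l))"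
    unfolding nxi_def sum_lessThan_mult_eq using r mult_add_less_mult[of _ "M S" _ "p S"]
    by (intro sum.cong refl) (simp add: Hmat_index nxi_def)
  also have "\<dots> = alpha S * (\<Sum>l<p S. Amat S i $$ (r mod p S, l) * x $ (r div p S * p S + l))
    + (\<Sum>m'<M S. W S (r div p S) m' * x $ (m' * p S + r mod p S))"
    using p by (intro sum_kron_row_mult[OF m]) simp
  finally show ?thesis .
qed

text \<open>The rows of \<open>W\<close> summing to one is what lets \<open>\<theta>\<^sup>*\<close> pass through the consensus step.\<close>

lemma xi_Suc_index:
  assumes W_rows: "\<And>m. m < M S \<Longrightarrow> (\<Sum>m'<M S. W S m m') = 1"
    and next_state: "\<omega> (Suc k) < nst S" and r: "r < nxi S"
  shows "xi S (Suc k) \<omega> $ r = (\<Sum>c<nxi S. Hmat S (zidx S (\<omega> k) (\<omega> (Suc k))) $$ (r,c) * xi S k \<omega> $ c)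
            + Gvec S (zidx S (\<omega> k) (\<omega> (Suc k))) $ r"
proof -
  define z where "z = zidx S (\<omega> k) (\<omega> (Suc k))"
  define m j where "m = r div p S" and "j = r mod p S"
  define \<theta> th where "\<theta> = theta S k \<omega>" and "th l = thstar S $ l" for l
  have zs: "zfst S z = \<omega> k" "zsnd S z = \<omega> (Suc k)"
    unfolding z_def using next_state by (simp_all add: zfst_zidx zsnd_zidx)
  have p: "0 < p S" using r unfolding nxi_def by (cases "p S") auto
  have m: "m < M S" and j: "j < p S"
    using r p unfolding m_def j_def nxi_def by (simp_all add: less_mult_imp_div_less)
  have xi_block: "xi S k \<omega> $ (m' * p S + l) = \<theta> m' l - th l" if "m' < M S" "l < p S" for m' l
    using that mult_add_less_mult[OF that] unfolding \<theta>_def th_def by (simp add: xi_index nxi_def)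
  have H: "(\<Sum>c<nxi S. Hmat S z $$ (r,c) * xi S k \<omega> $ c) =
      alpha S * ((\<Sum>l<p S. Amat S z $$ (j, l) * \<theta> m l) - (\<Sum>l<p S. Amat S z $$ (j, l) * th l))
      + ((\<Sum>m'<M S. W S m m' * \<theta> m' j) - th j)"
  proof -
    have "(\<Sum>m'<M S. W S m m' * (\<theta> m' j - th j)) = (\<Sum>m'<M S. W S m m' * \<theta> m' j) - th j"
      using W_rows[OF m] by (simp add: right_diff_distrib sum_subtractf flip: sum_distrib_right)
    then show ?thesis
      unfolding Hmat_row_mult[OF r] m_def[symmetric] j_def[symmetric] using m j
      by (simp add: xi_block right_diff_distrib sum_subtractf)
  qed
  have A: "(\<Sum>l<p S. Amat S z $$ (j, l) * \<theta> m l)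
      = phi S (\<omega> k) j * (\<Sum>l<p S. (gam S * phi S (\<omega> (Suc k)) l - phi S (\<omega> k) l) * \<theta> m l)"
    using j by (simp add: Amat_index zs sum_distrib_left mult.assoc)
  show ?thesis
    unfolding z_def[symmetric] H A Gvec_index[OF r] xi_index[OF r] theta.simps zs
    unfolding m_def[symmetric] j_def[symmetric] \<theta>_def th_def
    by (simp add: algebra_simps)
qed

lemma xi_Suc:
  assumes W_rows: "\<And>m. m < M S \<Longrightarrow> (\<Sum>m'<M S. W S m m') = 1" and next_state: "\<omega> (Suc k) < nst S"
  shows "xi S (Suc k) \<omega> = Hmat S (zidx S (\<omega> k) (\<omega> (Suc k))) *\<^sub>v xi S k \<omega> + Gvec S (zidx S (\<omega> k) (\<omega> (Suc k)))"
  by (rule eq_vecI) (auto simp: xi_Suc_index[where \<omega> = \<omega> and k = k, OF W_rows next_state] xi_carrier Gvec_carrier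
      index_mult_mat_vec_sum[OF Hmat_carrier xi_carrier] simp del: index_mult_mat_vec)

lemma zind_mult_xi_Suc:
  assumes W_rows: "\<And>m. m < M S \<Longrightarrow> (\<Sum>m'<M S. W S m m') = 1" and \<omega>: "\<omega> \<in> paths (nst S) (Suc k)"
  shows "zind S k i \<omega> * F (xi S (Suc k) \<omega>) = zind S k i \<omega> * F (Hmat S i *\<^sub>v xi S k \<omega> + Gvec S i)"
  using xi_Suc[where \<omega> = \<omega> and k = k, OF W_rows paths_mem_less[OF \<omega>, of "Suc k"]] unfolding zind_def by simp

lemma index_Hmat_mult_add_Gvec:
  assumes "a < nxi S"
  shows "(Hmat S i *\<^sub>v xi S k \<omega> + Gvec S i) $ a = (\<Sum>c<nxi S. Hmat S i $$ (a,c) * xi S k \<omega> $ c) + Gvec S i $ a"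
  using assms by (simp add: Gvec_carrier index_mult_mat_vec_sum[OF Hmat_carrier xi_carrier] del: index_mult_mat_vec)

section \<open>Recursions for the first and second moments\<close>

definition q_entry :: "td_sys \<Rightarrow> nat \<Rightarrow> nat \<Rightarrow> nat \<Rightarrow> real" where
  "q_entry S k i c = pexp S (Suc k) (\<lambda>\<omega>. xi S k \<omega> $ c * zind S k i \<omega>)"

definition Q_entry :: "td_sys \<Rightarrow> nat \<Rightarrow> nat \<Rightarrow> nat \<Rightarrow> nat \<Rightarrow> real" where
  "Q_entry S k i c d = pexp S (Suc k) (\<lambda>\<omega>. xi S k \<omega> $ c * xi S k \<omega> $ d * zind S k i \<omega>)"

lemma q_entry_Suc:
  assumes N: "0 < nst S" and W_rows: "\<And>m. m < M S \<Longrightarrow> (\<Sum>m'<M S. W S m m') = 1"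
    and j: "j < nz S" and a: "a < nxi S"
  shows "q_entry S (Suc k) j a =
    (\<Sum>i<nz S. zP S i j * ((\<Sum>c<nxi S. Hmat S i $$ (a,c) * q_entry S k i c) + Gvec S i $ a * pk S k i))"
proof -
  have "q_entry S (Suc k) j a = pexp S (Suc k) (\<lambda>\<omega>. \<Sum>i<nz S. zP S i j * (zind S k i \<omega> * xi S (Suc k) \<omega> $ a))"
    unfolding q_entry_def by (rule pexp_next_pair[OF N j xi_fun_depends_upto])
  also have "\<dots> = pexp S (Suc k) (\<lambda>\<omega>. \<Sum>i<nz S. zP S i j *
      ((\<Sum>c<nxi S. Hmat S i $$ (a,c) * (xi S k \<omega> $ c * zind S k i \<omega>)) + Gvec S i $ a * zind S k i \<omega>))"
    using zind_mult_xi_Suc[of S, OF W_rows, where F = "\<lambda>v. v $ a"]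
    by (intro pexp_cong sum.cong refl)
       (simp add: index_Hmat_mult_add_Gvec[OF a] sum_distrib_left distrib_left mult_ac)
  also have "\<dots> = (\<Sum>i<nz S. zP S i j * ((\<Sum>c<nxi S. Hmat S i $$ (a,c) * q_entry S k i c) + Gvec S i $ a * pk S k i))"
    unfolding q_entry_def pk_def by (simp add: pexp_sum pexp_mult_left pexp_mult_right pexp_add)
  finally show ?thesis .
qed

lemma prod_affine_expand:
  fixes hA hB x :: "nat \<Rightarrow> real"
  shows "z * (((\<Sum>c<n. hA c * x c) + gA) * ((\<Sum>c<n. hB c * x c) + gB)) =
     (\<Sum>d<n. \<Sum>c<n. hB d * hA c * (x c * x d * z)) + gA * (\<Sum>c<n. hB c * (x c * z))
       + gB * (\<Sum>c<n. hA c * (x c * z)) + gA * gB * z"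
proof -
  have pr: "(\<Sum>c<n. hA c * x c) * (\<Sum>c<n. hB c * x c) = (\<Sum>d<n. \<Sum>c<n. hB d * hA c * (x c * x d))"
  proof -
    have "(\<Sum>c<n. hA c * x c) * (\<Sum>d<n. hB d * x d) = (\<Sum>c<n. \<Sum>d<n. hA c * x c * (hB d * x d))"
      by (rule sum_product)
    also have "\<dots> = (\<Sum>d<n. \<Sum>c<n. hA c * x c * (hB d * x d))" by (rule sum.swap)
    also have "\<dots> = (\<Sum>d<n. \<Sum>c<n. hB d * hA c * (x c * x d))" by (simp add: mult_ac)
    finally show ?thesis .
  qed
  have "z * (((\<Sum>c<n. hA c * x c) + gA) * ((\<Sum>c<n. hB c * x c) + gB)) =
        z * ((\<Sum>c<n. hA c * x c) * (\<Sum>c<n. hB c * x c)) + gA * (z * (\<Sum>c<n. hB c * x c))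
          + gB * (z * (\<Sum>c<n. hA c * x c)) + gA * gB * z"
    by (simp add: algebra_simps)
  also have "\<dots> = (\<Sum>d<n. \<Sum>c<n. hB d * hA c * (x c * x d * z)) + gA * (\<Sum>c<n. hB c * (x c * z))
       + gB * (\<Sum>c<n. hA c * (x c * z)) + gA * gB * z"
    unfolding pr by (simp add: sum_distrib_left mult_ac)
  finally show ?thesis .
qed

lemma Q_entry_Suc:
  assumes N: "0 < nst S" and W_rows: "\<And>m. m < M S \<Longrightarrow> (\<Sum>m'<M S. W S m m') = 1"
    and j: "j < nz S" and a1: "a1 < nxi S" and a2: "a2 < nxi S"
  shows "Q_entry S (Suc k) j a1 a2 = (\<Sum>i<nz S. zP S i j *
     ((\<Sum>d<nxi S. \<Sum>c<nxi S. Hmat S i $$ (a2,d) * Hmat S i $$ (a1,c) * Q_entry S k i c d)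
      + Gvec S i $ a1 * (\<Sum>c<nxi S. Hmat S i $$ (a2,c) * q_entry S k i c)
      + Gvec S i $ a2 * (\<Sum>c<nxi S. Hmat S i $$ (a1,c) * q_entry S k i c)
      + Gvec S i $ a1 * Gvec S i $ a2 * pk S k i))"
proof -
  let ?aff = "\<lambda>\<omega> i a. (\<Sum>c<nxi S. Hmat S i $$ (a,c) * xi S k \<omega> $ c) + Gvec S i $ a"
  have "Q_entry S (Suc k) j a1 a2 = pexp S (Suc k)
      (\<lambda>\<omega>. \<Sum>i<nz S. zP S i j * (zind S k i \<omega> * (xi S (Suc k) \<omega> $ a1 * xi S (Suc k) \<omega> $ a2)))"
    unfolding Q_entry_def by (rule pexp_next_pair[OF N j xi_fun_depends_upto])
  also have "\<dots> = pexp S (Suc k) (\<lambda>\<omega>. \<Sum>i<nz S. zP S i j * (zind S k i \<omega> * (?aff \<omega> i a1 * ?aff \<omega> i a2)))"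
    using zind_mult_xi_Suc[of S, OF W_rows, where F = "\<lambda>v. v $ a1 * v $ a2"]
    by (intro pexp_cong sum.cong refl) (simp add: index_Hmat_mult_add_Gvec[OF a1] index_Hmat_mult_add_Gvec[OF a2])
  also have "\<dots> = (\<Sum>i<nz S. zP S i j *
     ((\<Sum>d<nxi S. \<Sum>c<nxi S. Hmat S i $$ (a2,d) * Hmat S i $$ (a1,c) * Q_entry S k i c d)
      + Gvec S i $ a1 * (\<Sum>c<nxi S. Hmat S i $$ (a2,c) * q_entry S k i c)
      + Gvec S i $ a2 * (\<Sum>c<nxi S. Hmat S i $$ (a1,c) * q_entry S k i c)
      + Gvec S i $ a1 * Gvec S i $ a2 * pk S k i))"
    unfolding prod_affine_expand q_entry_def Q_entry_def pk_def
    by (simp add: pexp_sum pexp_mult_left pexp_mult_right pexp_add)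
  finally show ?thesis .
qed

definition uq :: "td_sys \<Rightarrow> nat \<Rightarrow> real vec" where
  "uq S k = block_vec (nz S) (nxi S) (\<lambda>j. vec (nxi S) (\<lambda>r. \<Sum>i<nz S. zP S i j * pk S k i * Gvec S i $ r))"

definition uQ :: "td_sys \<Rightarrow> nat \<Rightarrow> real vec" where
  "uQ S k = block_vec (nz S) ((nxi S)\<^sup>2) (\<lambda>j. vec ((nxi S)\<^sup>2) (\<lambda>r. \<Sum>i<nz S. zP S i j * pk S k i *
        kron (col_mat (Gvec S i)) (col_mat (Gvec S i)) $$ (r, 0)))"

lemma uq_carrier: "uq S k \<in> carrier_vec (nz S * nxi S)"
  and uQ_carrier: "uQ S k \<in> carrier_vec (nz S * (nxi S)\<^sup>2)"
  and uq_inf_carrier: "uq_inf S \<in> carrier_vec (nz S * nxi S)"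
  and uQ_inf_carrier: "uQ_inf S \<in> carrier_vec (nz S * (nxi S)\<^sup>2)"
  unfolding uq_def uQ_def uq_inf_def uQ_inf_def by (rule block_vec_carrier)+

lemma qv_carrier: "qv S k \<in> carrier_vec (nz S * nxi S)" unfolding qv_def by simp

lemma Qv_carrier: "Qv S k \<in> carrier_vec (nz S * (nxi S)\<^sup>2)" unfolding Qv_def by simp

lemma qv_index: assumes "i < nz S" "c < nxi S" shows "qv S k $ (i * nxi S + c) = q_entry S k i c"
  using assms mult_add_less_mult[of i "nz S" c "nxi S"] unfolding qv_def q_entry_def by simp

lemma Qv_index: assumes i: "i < nz S" and c: "c < nxi S" and d: "d < nxi S"
  shows "Qv S k $ (i * (nxi S * nxi S) + (d * nxi S + c)) = Q_entry S k i c d"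
proof -
  have dc: "d * nxi S + c < nxi S * nxi S" using mult_add_less_mult[OF d c] .
  have lt: "i * (nxi S * nxi S) + (d * nxi S + c) < nz S * (nxi S * nxi S)" using mult_add_less_mult[OF i dc] .
  have m1: "(i * (nxi S * nxi S) + (d * nxi S + c)) mod (nxi S * nxi S) = d * nxi S + c"
    and m2: "(i * (nxi S * nxi S) + (d * nxi S + c)) div (nxi S * nxi S) = i"
    using dc by (simp_all add: index_div_eq index_mod_eq)
  have m3: "(d * nxi S + c) mod nxi S = c" "(d * nxi S + c) div nxi S = d" using c by auto
  have m0: "(d * nxi S + c) mod (nxi S * nxi S) = d * nxi S + c" using dc by simp
  show ?thesis using lt unfolding Qv_def Q_entry_def power2_eq_square using c by (simp add: m1 m2 m3 m0 mult_ac)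
qed

lemma H11_eq: "H11 S = first_moment_mat (nz S) (nxi S) (zP S) (Hmat S)"
  unfolding H11_def first_moment_mat_def ..

lemma H22_eq: "H22 S = second_moment_mat (nz S) (nxi S) (zP S) (Hmat S)"
  unfolding H22_def second_moment_mat_def power2_eq_square ..

lemma H11_carrier: "H11 S \<in> carrier_mat (nz S * nxi S) (nz S * nxi S)"
  unfolding H11_def by (rule block_mat_carrier)

lemma H22_carrier: "H22 S \<in> carrier_mat (nz S * (nxi S)\<^sup>2) (nz S * (nxi S)\<^sup>2)"
  unfolding H22_def by (rule block_mat_carrier)

lemma H21_carrier: "H21 S \<in> carrier_mat (nz S * (nxi S)\<^sup>2) (nz S * nxi S)"
  unfolding H21_def by (rule block_mat_carrier)

lemma qv_Suc:
  assumes N: "0 < nst S" and W_rows: "\<And>m. m < M S \<Longrightarrow> (\<Sum>m'<M S. W S m m') = 1"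
  shows "qv S (Suc k) = H11 S *\<^sub>v qv S k + uq S k"
proof (rule eq_vecI)
  show "dim_vec (qv S (Suc k)) = dim_vec (H11 S *\<^sub>v qv S k + uq S k)"
    unfolding qv_def uq_def block_vec_def using H11_carrier[of S] by simp
  fix r assume "r < dim_vec (H11 S *\<^sub>v qv S k + uq S k)"
  then have r: "r < nz S * nxi S" unfolding uq_def block_vec_def by simp
  define j where "j = r div nxi S"
  define a where "a = r mod nxi S"
  have j: "j < nz S" and a: "a < nxi S" and rja: "r = j * nxi S + a"
    using index_decomp[OF r] unfolding j_def a_def by auto
  have Hq: "(H11 S *\<^sub>v qv S k) $ r = (\<Sum>i<nz S. \<Sum>c<nxi S. zP S i j * Hmat S i $$ (a,c) * q_entry S k i c)"
    unfolding rja H11_def block_mat_mult_vec_index[OF j a qv_carrier]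
    by (intro sum.cong refl) (use a in \<open>simp add: qv_index\<close>)
  have u: "uq S k $ r = (\<Sum>i<nz S. zP S i j * pk S k i * Gvec S i $ a)"
    unfolding rja uq_def block_vec_index[OF j a] using a by simp
  have "(H11 S *\<^sub>v qv S k + uq S k) $ r = (H11 S *\<^sub>v qv S k) $ r + uq S k $ r"
    using r uq_carrier[of S k] H11_carrier[of S] by simp
  also have "\<dots> = (\<Sum>i<nz S. zP S i j * ((\<Sum>c<nxi S. Hmat S i $$ (a,c) * q_entry S k i c) + Gvec S i $ a * pk S k i))"
    unfolding Hq u by (simp add: sum_distrib_left distrib_left sum.distrib mult_ac)
  also have "\<dots> = qv S (Suc k) $ r" unfolding rja qv_index[OF j a] using q_entry_Suc[OF N W_rows j a, of k] by simp
  finally show "qv S (Suc k) $ r = (H11 S *\<^sub>v qv S k + uq S k) $ r" by simp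
qed

lemma col_mat_dims[simp]: "dim_row (col_mat v) = dim_vec v" "dim_col (col_mat v) = 1"
  unfolding col_mat_def by simp_all

lemma col_mat_index: "i < dim_vec v \<Longrightarrow> j < 1 \<Longrightarrow> col_mat v $$ (i,j) = v $ i"
  unfolding col_mat_def by simp

lemma H21_block_index:
  assumes a1: "a1 < nxi S" and a2: "a2 < nxi S" and c: "c < nxi S"
  shows "(zP S i j \<cdot>\<^sub>m (kron (Hmat S i) (col_mat (Gvec S i)) + kron (col_mat (Gvec S i)) (Hmat S i))) $$ (a2 * nxi S + a1, c)
     = zP S i j * (Hmat S i $$ (a2, c) * Gvec S i $ a1 + Gvec S i $ a2 * Hmat S i $$ (a1, c))"
proof -
  let ?n = "nxi S"
  have b: "a2 * ?n + a1 < ?n * ?n" using mult_add_less_mult[OF a2 a1] .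
  have bd: "(a2 * ?n + a1) div ?n = a2" "(a2 * ?n + a1) mod ?n = a1" using a1 by auto
  have cd: "c div ?n = 0" "c mod ?n = c" using c by auto
  have k1: "kron (Hmat S i) (col_mat (Gvec S i)) $$ (a2 * ?n + a1, c) = Hmat S i $$ (a2, c) * Gvec S i $ a1"
    using b c by (simp add: kron_index bd col_mat_index a1)
  have k2: "kron (col_mat (Gvec S i)) (Hmat S i) $$ (a2 * ?n + a1, c) = Gvec S i $ a2 * Hmat S i $$ (a1, c)"
    using b c a1 by (simp add: kron_index bd cd col_mat_index a2)
  have d1: "dim_row (kron (col_mat (Gvec S i)) (Hmat S i)) = ?n * ?n" "dim_col (kron (col_mat (Gvec S i)) (Hmat S i)) = ?n"
    unfolding kron_def by simp_all
  show ?thesis using b c d1 k1 k2 by simp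
qed

lemma uQ_index:
  assumes j: "j < nz S" and a1: "a1 < nxi S" and a2: "a2 < nxi S"
  shows "uQ S k $ (j * (nxi S * nxi S) + (a2 * nxi S + a1)) = (\<Sum>i<nz S. zP S i j * pk S k i * (Gvec S i $ a2 * Gvec S i $ a1))"
proof -
  let ?n = "nxi S"
  have b: "a2 * ?n + a1 < ?n * ?n" using mult_add_less_mult[OF a2 a1] .
  have bd: "(a2 * ?n + a1) div ?n = a2" "(a2 * ?n + a1) mod ?n = a1" using a1 by auto
  have "uQ S k $ (j * (?n * ?n) + (a2 * ?n + a1)) = (\<Sum>i<nz S. zP S i j * pk S k i *
        kron (col_mat (Gvec S i)) (col_mat (Gvec S i)) $$ (a2 * ?n + a1, 0))"
    unfolding uQ_def power2_eq_square block_vec_index[OF j b] using b by simp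
  also have "\<dots> = (\<Sum>i<nz S. zP S i j * pk S k i * (Gvec S i $ a2 * Gvec S i $ a1))"
    using b by (intro sum.cong refl) (simp add: kron_index bd col_mat_index a1 a2)
  finally show ?thesis .
qed

lemma H22_mult_Qv_index:
  assumes j: "j < nz S" and a1: "a1 < nxi S" and a2: "a2 < nxi S"
  shows "(H22 S *\<^sub>v Qv S k) $ (j * (nxi S * nxi S) + (a2 * nxi S + a1)) = (\<Sum>i<nz S. zP S i j *
    (\<Sum>d<nxi S. \<Sum>c<nxi S. Hmat S i $$ (a2,d) * Hmat S i $$ (a1,c) * Q_entry S k i c d))"
  using second_moment_mult_vec_index[OF Hmat_carrier j a1 a2, of "Qv S k" "zP S"] Qv_carrier[of S k]
  by (simp add: H22_eq power2_eq_square Qv_index sum_distrib_left)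

lemma H21_mult_qv_index:
  assumes j: "j < nz S" and a1: "a1 < nxi S" and a2: "a2 < nxi S"
  shows "(H21 S *\<^sub>v qv S k) $ (j * (nxi S * nxi S) + (a2 * nxi S + a1)) = (\<Sum>i<nz S. \<Sum>c<nxi S.
    zP S i j * (Hmat S i $$ (a2, c) * Gvec S i $ a1 + Gvec S i $ a2 * Hmat S i $$ (a1, c)) * q_entry S k i c)"
  unfolding H21_def power2_eq_square block_mat_mult_vec_index[OF j mult_add_less_mult[OF a2 a1] qv_carrier]
  by (intro sum.cong refl) (simp add: H21_block_index[OF a1 a2] qv_index)

lemma Qv_Suc:
  assumes N: "0 < nst S" and W_rows: "\<And>m. m < M S \<Longrightarrow> (\<Sum>m'<M S. W S m m') = 1"
  shows "Qv S (Suc k) = H22 S *\<^sub>v Qv S k + (H21 S *\<^sub>v qv S k + uQ S k)"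
proof (rule eq_vecI)
  let ?n = "nxi S"
  show "dim_vec (Qv S (Suc k)) = dim_vec (H22 S *\<^sub>v Qv S k + (H21 S *\<^sub>v qv S k + uQ S k))"
    using uQ_carrier[of S k] unfolding Qv_def by simp
  fix r assume "r < dim_vec (H22 S *\<^sub>v Qv S k + (H21 S *\<^sub>v qv S k + uQ S k))"
  then have r: "r < nz S * (?n * ?n)" using uQ_carrier[of S k] by (simp add: power2_eq_square)
  define j b where "j = r div (?n * ?n)" and "b = r mod (?n * ?n)"
  have j: "j < nz S" and b: "b < ?n * ?n" and rjb: "r = j * (?n * ?n) + b"
    using index_decomp[OF r] unfolding j_def b_def by auto
  define a1 a2 where "a1 = b mod ?n" and "a2 = b div ?n"
  have a2: "a2 < ?n" and a1: "a1 < ?n" and ba: "b = a2 * ?n + a1"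
    using index_decomp[OF b] unfolding a1_def a2_def by auto
  have rr: "r = j * (?n * ?n) + (a2 * ?n + a1)" using rjb ba by simp
  note H2 = H22_mult_Qv_index[OF j a1 a2, of k, folded rr]
  note H1 = H21_mult_qv_index[OF j a1 a2, of k, folded rr]
  have U: "uQ S k $ r = (\<Sum>i<nz S. zP S i j * pk S k i * (Gvec S i $ a2 * Gvec S i $ a1))"
    using uQ_index[OF j a1 a2, of k] rr by simp
  have "(H22 S *\<^sub>v Qv S k + (H21 S *\<^sub>v qv S k + uQ S k)) $ r = (H22 S *\<^sub>v Qv S k) $ r + (H21 S *\<^sub>v qv S k) $ r + uQ S k $ r"
    using r uQ_carrier[of S k] H22_carrier[of S] H21_carrier[of S] by (simp add: power2_eq_square)
  also have "\<dots> = (\<Sum>i<nz S. zP S i j *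
     ((\<Sum>d<?n. \<Sum>c<?n. Hmat S i $$ (a2,d) * Hmat S i $$ (a1,c) * Q_entry S k i c d)
      + Gvec S i $ a1 * (\<Sum>c<?n. Hmat S i $$ (a2,c) * q_entry S k i c)
      + Gvec S i $ a2 * (\<Sum>c<?n. Hmat S i $$ (a1,c) * q_entry S k i c)
      + Gvec S i $ a1 * Gvec S i $ a2 * pk S k i))"
    unfolding H2 H1 U
    by (simp add: sum_distrib_left distrib_left distrib_right sum.distrib mult_ac)
  also have "\<dots> = Qv S (Suc k) $ r" unfolding rr Qv_index[OF j a1 a2] using Q_entry_Suc[OF N W_rows j a1 a2, of k] by simp
  finally show "Qv S (Suc k) $ r = (H22 S *\<^sub>v Qv S k + (H21 S *\<^sub>v qv S k + uQ S k)) $ r" by simp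
qed

lemma Cdelta_carrier: "Cdelta S \<in> carrier_mat 1 (nz S * (nxi S)\<^sup>2)"
  unfolding Cdelta_def kron_def col_mat_def vecm_def power2_eq_square by simp

lemma Cdelta_index:
  assumes i: "i < nz S" and c: "c < nxi S" and d: "d < nxi S"
  shows "Cdelta S $$ (0, i * (nxi S * nxi S) + (d * nxi S + c)) = (1 / real (M S)) * (if c = d then 1 else 0)"
proof -
  let ?n = "nxi S"
  have dc: "d * ?n + c < ?n * ?n" using mult_add_less_mult[OF d c] .
  have col: "i * (?n * ?n) + (d * ?n + c) < nz S * (?n * ?n)" using mult_add_less_mult[OF i dc] .
  have dm: "(i * (?n * ?n) + (d * ?n + c)) div (?n * ?n) = i" "(i * (?n * ?n) + (d * ?n + c)) mod (?n * ?n) = d * ?n + c"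
    using dc by (simp_all add: index_div_eq index_mod_eq)
  have dm2: "(d * ?n + c) mod ?n = c" "(d * ?n + c) div ?n = d" using c by auto
  define T where "T = transpose_mat (col_mat (vecm (1\<^sub>m ?n)))"
  have Td: "dim_row T = 1" "dim_col T = ?n * ?n" unfolding T_def vecm_def col_mat_def by simp_all
  have T0: "T $$ (0, d * ?n + c) = (if c = d then 1 else 0)"
    unfolding T_def using dc c d by (simp add: col_mat_index vecm_def dm2)
  have "kron (mat 1 (nz S) (\<lambda>_. 1)) T $$ (0, i * (?n * ?n) + (d * ?n + c)) = (if c = d then 1 else 0)"
  proof -
    have m0: "(d * ?n + c) mod (?n * ?n) = d * ?n + c" using dc by simp
    show ?thesis using col Td T0 i by (simp add: kron_index dm m0)
  qed
  moreover have "kron (mat 1 (nz S) (\<lambda>_. 1)) T \<in> carrier_mat 1 (nz S * (?n * ?n))"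
    using kron_carrier[of "mat 1 (nz S) (\<lambda>_. 1)" T] Td by simp
  ultimately show ?thesis unfolding Cdelta_def T_def[symmetric] using col by simp
qed

lemma delta_eq_Cdelta:
  assumes N: "0 < nst S" and st: "stochastic_matrix (nst S) (P S)"
  shows "delta S k = (Cdelta S *\<^sub>v Qv S k) $ 0"
proof -
  let ?n = "nxi S"
  have Qc: "Qv S k \<in> carrier_vec (nz S * (?n*?n))" using Qv_carrier[of S k] by (simp add: power2_eq_square)
  have Cc: "Cdelta S \<in> carrier_mat 1 (nz S * (?n*?n))" using Cdelta_carrier[of S] by (simp add: power2_eq_square)
  have "(Cdelta S *\<^sub>v Qv S k) $ 0 = (\<Sum>col<nz S * (?n * ?n). Cdelta S $$ (0, col) * Qv S k $ col)"
    by (rule index_mult_mat_vec_sum[OF Cc Qc]) simp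
  also have "\<dots> = (\<Sum>i<nz S. \<Sum>b<?n * ?n. Cdelta S $$ (0, i * (?n * ?n) + b) * Qv S k $ (i * (?n * ?n) + b))"
    by (rule sum_lessThan_mult_eq)
  also have "\<dots> = (\<Sum>i<nz S. \<Sum>d<?n. \<Sum>c<?n. Cdelta S $$ (0, i * (?n * ?n) + (d * ?n + c)) * Qv S k $ (i * (?n * ?n) + (d * ?n + c)))"
    by (rule sum.cong[OF refl], rule sum_lessThan_mult_eq)
  also have "\<dots> = (\<Sum>i<nz S. \<Sum>d<?n. \<Sum>c<?n. (1 / real (M S)) * (if c = d then Q_entry S k i c d else 0))"
    by (intro sum.cong refl) (simp add: Cdelta_index Qv_index)
  also have "\<dots> = (1 / real (M S)) * (\<Sum>i<nz S. \<Sum>d<?n. Q_entry S k i d d)"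
    by (simp add: sum_distrib_left if_distrib cong: if_cong)
  also have "(\<Sum>i<nz S. \<Sum>d<?n. Q_entry S k i d d) = pexp S (Suc k) (\<lambda>\<omega>. \<Sum>i<nz S. \<Sum>d<?n. xi S k \<omega> $ d * xi S k \<omega> $ d * zind S k i \<omega>)"
    unfolding Q_entry_def by (simp add: pexp_sum)
  also have "\<dots> = pexp S (Suc k) (\<lambda>\<omega>. \<Sum>d<?n. (xi S k \<omega> $ d)\<^sup>2)"
  proof (rule pexp_cong)
    fix \<omega> assume w: "\<omega> \<in> paths (nst S) (Suc k)"
    have x: "\<omega> k < nst S" and y: "\<omega> (Suc k) < nst S" using paths_mem_less[OF w] by auto
    have "(\<Sum>i<nz S. \<Sum>d<?n. xi S k \<omega> $ d * xi S k \<omega> $ d * zind S k i \<omega>) = (\<Sum>i<nz S. zind S k i \<omega> * (\<Sum>d<?n. (xi S k \<omega> $ d)\<^sup>2))"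
      by (simp add: sum_distrib_left power2_eq_square mult_ac)
    also have "\<dots> = (\<Sum>d<?n. (xi S k \<omega> $ d)\<^sup>2)" by (rule sum_zind[OF x y])
    finally show "(\<Sum>i<nz S. \<Sum>d<?n. xi S k \<omega> $ d * xi S k \<omega> $ d * zind S k i \<omega>) = (\<Sum>d<?n. (xi S k \<omega> $ d)\<^sup>2)" .
  qed
  also have "\<dots> = pexp S k (\<lambda>\<omega>. \<Sum>d<?n. (xi S k \<omega> $ d)\<^sup>2)"
    by (rule pexp_Suc_marginal[OF st xi_fun_depends_upto])
  finally show ?thesis unfolding delta_def by simp
qed

lemma uq_tendsto:
  assumes pkt: "\<And>i. i < nz S \<Longrightarrow> (\<lambda>k. pk S k i) \<longlonglongrightarrow> pinf S i" and r: "r < nz S * nxi S"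
  shows "(\<lambda>k. uq S k $ r) \<longlonglongrightarrow> uq_inf S $ r"
proof -
  define j where "j = r div nxi S"
  define a where "a = r mod nxi S"
  have j: "j < nz S" and a: "a < nxi S" and rja: "r = j * nxi S + a"
    using index_decomp[OF r] unfolding j_def a_def by auto
  have "(\<lambda>k. \<Sum>i<nz S. zP S i j * pk S k i * Gvec S i $ a) \<longlonglongrightarrow> (\<Sum>i<nz S. zP S i j * pinf S i * Gvec S i $ a)"
    using pkt by (intro tendsto_sum tendsto_mult tendsto_const) auto
  then show ?thesis unfolding rja uq_def uq_inf_def block_vec_index[OF j a] using a by simp
qed

lemma uQ_tendsto:
  assumes pkt: "\<And>i. i < nz S \<Longrightarrow> (\<lambda>k. pk S k i) \<longlonglongrightarrow> pinf S i" and r: "r < nz S * (nxi S)\<^sup>2"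
  shows "(\<lambda>k. uQ S k $ r) \<longlonglongrightarrow> uQ_inf S $ r"
proof -
  define j where "j = r div (nxi S)\<^sup>2"
  define a where "a = r mod (nxi S)\<^sup>2"
  have j: "j < nz S" and a: "a < (nxi S)\<^sup>2" and rja: "r = j * (nxi S)\<^sup>2 + a"
    using index_decomp[OF r] unfolding j_def a_def by auto
  have "(\<lambda>k. \<Sum>i<nz S. zP S i j * pk S k i * kron (col_mat (Gvec S i)) (col_mat (Gvec S i)) $$ (a, 0)) \<longlonglongrightarrow>
        (\<Sum>i<nz S. zP S i j * pinf S i * kron (col_mat (Gvec S i)) (col_mat (Gvec S i)) $$ (a, 0))"
    using pkt by (intro tendsto_sum tendsto_mult tendsto_const) auto
  then show ?thesis unfolding rja uQ_def uQ_inf_def block_vec_index[OF j a] using a by simp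
qed

lemma lin_indep_features_dim_pos:
  assumes feat: "lin_indep_features N d f" and N: "0 < N"
  shows "0 < d"
proof (rule ccontr)
  assume "\<not> 0 < d"
  then have "\<forall>s<N. (1::real) = 0"
    using feat[unfolded lin_indep_features_def, rule_format, of "\<lambda>_. 1"] by auto
  then show False using N by auto
qed

lemma H11_powers_vanish:
  assumes P_stoch: "stochastic_matrix (nst S) (P S)" and N_pos: "0 < nst S"
    and H22: "mat_powers_vanish (H22 S) (nz S * (nxi S)\<^sup>2)"
  shows "mat_powers_vanish (H11 S) (nz S * nxi S)"
proof -
  have van: "mat_powers_vanish (second_moment_mat (nz S) (nxi S) (zP S) (Hmat S)) (nz S * (nxi S * nxi S))"
    using H22 by (simp only: H22_eq power2_eq_square)
  show ?thesis
    unfolding H11_eq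
    by (rule mat_powers_vanish_first_moment[where Hf = "Hmat S" and pp = "zP S", OF Hmat_carrier _ _ van])
       (use zP_nonneg[OF P_stoch N_pos] zP_row_sum[OF P_stoch N_pos] in auto)
qed

context
  fixes S :: td_sys
  assumes N_pos: "0 < nst S" and P_stoch: "stochastic_matrix (nst S) (P S)"
    and irred: "irreducible_chain (nst S) (P S)" and aper: "aperiodic_chain (nst S) (P S)"
    and W_rows: "\<And>m. m < M S \<Longrightarrow> (\<Sum>m'<M S. W S m m') = 1"
    and H22: "mat_powers_vanish (H22 S) (nz S * (nxi S)\<^sup>2)"
begin

lemma q_inf_carrier: "q_inf S \<in> carrier_vec (nz S * nxi S)"
  unfolding q_inf_def
  using minv_inverts(1)[OF minus_carrier_mat[OF H11_carrier] invertible_one_minus_mat[OF H11_carrier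
      H11_powers_vanish[OF P_stoch N_pos H22]]] uq_inf_carrier by simp

lemma qv_tendsto: "vec_tendsto (qv S) (q_inf S)"
  unfolding q_inf_def
  by (rule affine_iteration_tendsto[OF H11_carrier H11_powers_vanish[OF P_stoch N_pos H22] qv_carrier
        uq_carrier qv_Suc[of S, OF N_pos W_rows] uq_inf_carrier
        uq_tendsto[OF pk_tendsto[OF N_pos P_stoch irred aper]]])

lemma Qv_tendsto: "vec_tendsto (Qv S) (Q_inf S)"
  unfolding Q_inf_def
proof (rule affine_iteration_tendsto[where x = "Qv S" and u = "\<lambda>k. H21 S *\<^sub>v qv S k + uQ S k",
      OF H22_carrier H22 Qv_carrier _ Qv_Suc[of S, OF N_pos W_rows]])
  show "H21 S *\<^sub>v qv S k + uQ S k \<in> carrier_vec (nz S * (nxi S)\<^sup>2)" for k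
    using H21_carrier[of S] qv_carrier uQ_carrier by simp
  show "H21 S *\<^sub>v q_inf S + uQ_inf S \<in> carrier_vec (nz S * (nxi S)\<^sup>2)"
    using H21_carrier[of S] q_inf_carrier uQ_inf_carrier by simp
  fix r assume r: "r < nz S * (nxi S)\<^sup>2"
  have "(\<lambda>k. (H21 S *\<^sub>v qv S k) $ r + uQ S k $ r) \<longlonglongrightarrow> (H21 S *\<^sub>v q_inf S) $ r + uQ_inf S $ r"
    by (intro tendsto_add mult_mat_vec_tendsto[OF H21_carrier qv_tendsto q_inf_carrier r]
        uQ_tendsto[OF pk_tendsto[OF N_pos P_stoch irred aper] r])
  moreover have "(H21 S *\<^sub>v qv S k + uQ S k) $ r = (H21 S *\<^sub>v qv S k) $ r + uQ S k $ r" for k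
    using r uQ_carrier[of S k] by simp
  moreover have "(H21 S *\<^sub>v q_inf S + uQ_inf S) $ r = (H21 S *\<^sub>v q_inf S) $ r + uQ_inf S $ r"
    using r uQ_inf_carrier[of S] by simp
  ultimately show "(\<lambda>k. (H21 S *\<^sub>v qv S k + uQ S k) $ r) \<longlonglongrightarrow> (H21 S *\<^sub>v q_inf S + uQ_inf S) $ r"
    by simp
qed

lemma delta_tendsto: "delta S \<longlonglongrightarrow> delta_inf S"
proof -
  have "Q_inf S \<in> carrier_vec (nz S * (nxi S)\<^sup>2)"
    unfolding Q_inf_def using H21_carrier[of S] q_inf_carrier uQ_inf_carrier
      minv_inverts(1)[OF minus_carrier_mat[OF H22_carrier] invertible_one_minus_mat[OF H22_carrier H22]]
    by simp
  from mult_mat_vec_tendsto[OF Cdelta_carrier Qv_tendsto this, of 0]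
  show ?thesis unfolding delta_inf_def Q_inf_def[symmetric] delta_eq_Cdelta[OF N_pos P_stoch, symmetric]
    by simp
qed

end

theorem mainTheorem2:
  fixes S :: td_sys
  assumes N_pos: "0 < nst S"
    and P_stoch: "stochastic_matrix (nst S) (P S)"
    and mu0_prob: "prob_vector (nst S) (mu0 S)"
    and irred: "irreducible_chain (nst S) (P S)"
    and aper: "aperiodic_chain (nst S) (P S)"
    and feat: "lin_indep_features (nst S) (p S) (phi S)"
    and gam: "0 < gam S" "gam S < 1"
    and M_pos: "0 < M S"
    and W_ds: "doubly_stochastic01 (M S) (W S)"
    and W_conn: "connected_pattern (M S) (W S)"
    and alpha_pos: "0 < alpha S"
    and rho: "spectral_radius (map_mat complex_of_real (H22 S)) < 1"
  shows "invertible_mat (1\<^sub>m (nz S * nxi S) - H11 S)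
       \<and> invertible_mat (1\<^sub>m (nz S * (nxi S)\<^sup>2) - H22 S)
       \<and> vec_tendsto (qv S) (q_inf S)
       \<and> vec_tendsto (Qv S) (Q_inf S)
       \<and> (delta S \<longlongrightarrow> delta_inf S) sequentially"
proof -
  \<comment> \<open>Unused hypotheses: the limits exist for every initial law, and connectivity of \<open>W\<close>,
     \<open>\<alpha> > 0\<close> and \<open>0 < \<gamma> < 1\<close> only serve to guarantee \<open>\<sigma>(H\<^sub>2\<^sub>2) < 1\<close>, which is assumed directly.\<close>
  have W_rows: "\<And>m. m < M S \<Longrightarrow> (\<Sum>m'<M S. W S m m') = 1"
    using W_ds unfolding doubly_stochastic01_def by auto
  have "0 < nz S * (nxi S)\<^sup>2"
    using N_pos M_pos lin_indep_features_dim_pos[OF feat N_pos] by (simp add: nz_def nxi_def)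
  then have H22: "mat_powers_vanish (H22 S) (nz S * (nxi S)\<^sup>2)"
    by (rule mat_powers_vanish_if_spectral_radius_less_1[OF H22_carrier _ rho])
  note H11 = H11_powers_vanish[OF P_stoch N_pos H22]
  note setting = N_pos P_stoch irred aper W_rows H22
  show ?thesis
    using invertible_one_minus_mat[OF H11_carrier H11] invertible_one_minus_mat[OF H22_carrier H22]
      qv_tendsto[of S, OF setting] Qv_tendsto[of S, OF setting] delta_tendsto[of S, OF setting] by blast
qed

end
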